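(* Let $\{x^k\}_k$, $\{z^k\}_k$ be generated by the normal map-based stochastic proximal gradient method described in the context and suppose (A.3) and (A.4) hold. Define $\xi(\omega):=1/(2+2\lambda^2L(\omega)^2)$ for $\omega$ with $L(\omega)<\infty$ and $\xi(\omega):=0$ otherwise. Then for every $\omega$ with $L(\omega)<\infty$ there exists $\bar T(\omega)>0$ such that for every time window $T\in(0,\bar T(\omega)]$, with associated time indices $\{m_k\}_k$ and aggregated errors $\{s_k\}_k$, there is $K_0\in\mathbb N$ such that \[ H_{\xi(\omega)}(z^{m_{k+1}}(\omega))-H_{\xi(\omega)}(z^{m_k}(\omega))\le-\frac{\xi(\omega)T}{5}\|F^\lambda_{\mathrm{nor}}(z^{m_k}(\omega))\|^2+\frac5T s_k(\omega)^2\qquad\forall\,k\ge K_0. \]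
   Context: Let $\varphi:\mathbb{R}^d\to(-\infty,\infty]$ be convex, lower semicontinuous and proper, let $f:\mathbb{R}^d\to\mathbb{R}$ be continuously differentiable on an open set containing $\mathrm{dom}\,\varphi$, and set $\psi=f+\varphi$. For $\lambda>0$ let $\mathrm{prox}_{\lambda\varphi}(x)=\operatorname{argmin}_y\{\varphi(y)+\frac{1}{2\lambda}\|x-y\|^2\}$, $\mathrm{env}_{\lambda\varphi}$ the Moreau envelope with $\nabla\mathrm{env}_{\lambda\varphi}(x)=(x-\mathrm{prox}_{\lambda\varphi}(x))/\lambda$, and the normal map $F^\lambda_{\mathrm{nor}}(z)=\nabla f(\mathrm{prox}_{\lambda\varphi}(z))+\frac1\lambda(z-\mathrm{prox}_{\lambda\varphi}(z))$. For $\xi\ge0$ the merit function is $H_\xi(z)=\psi(\mathrm{prox}_{\lambda\varphi}(z))+\frac{\xi\lambda}{2}\|F^\lambda_{\mathrm{nor}}(z)\|^2$. Method: on a filtered probability space $(\Omega,\mathcal F,\{\mathcal F_k\}_k,\mathbb P)$, with $\lambda>0$, step sizes $\alpha_k>0$, deterministic $z^0$, $x^0=\mathrm{prox}_{\lambda\varphi}(z^0)$, and $\mathcal F_{k+1}$-measurable random vectors $g^k$, set $z^{k+1}=z^k-\alpha_k(g^k+\nabla\mathrm{env}_{\lambda\varphi}(z^k))$, $x^{k+1}=\mathrm{prox}_{\lambda\varphi}(z^{k+1})$. Let $e^k=g^k-\nabla f(x^k)$. $L(\omega)=\sup_{\bar x\in\mathrm{cl}(\mathrm{conv}\{x^k(\omega)\}_k)}\mathrm{lip}\,\nabla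 f(\bar x)$ with $\mathrm{lip}\,\nabla f(\bar x)=\limsup_{x,x'\to\bar x,\,x\ne x'}\|\nabla f(x)-\nabla f(x')\|/\|x-x'\|$. Time windows: $\tau_{k,n}=\sum_{i=k}^{n-1}\alpha_i$ ($\tau_{k,k}=0$), $\varpi(k,T)=\max\{k+1,\sup\{n\ge k:\tau_{k,n}\le T\}\}$; for $T>0$ the time indices are $m_0=0$, $m_{k+1}=\varpi(m_k,T)$, and $s_k=\max_{m_k<j\le m_{k+1}}\|\sum_{i=m_k}^{j-1}\alpha_ie^i\|$. Conditions: (A.3) $\sum_k\alpha_k=\infty$ and $\alpha_k\to0$. (A.4) There are $\{\sigma_k\}_k\subseteq\mathbb R_+$ with $\mathbb E\|e^k\|^2\le\sigma_k^2$ and a positive sequence $\{\beta_k\}_k$, non-decreasing for all $k$ large, with $\sum_k\alpha_k^2\beta_k^2\sigma_k^2<\infty$. *)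

theory Defs
  imports "HOL-Analysis.Analysis" "HOL-Probability.Probability"
begin

definition proper_fun :: "('a \<Rightarrow> ereal) \<Rightarrow> bool" where
  "proper_fun \<phi> \<longleftrightarrow> (\<forall>x. \<phi> x \<noteq> -\<infinity>) \<and> (\<exists>x. \<phi> x \<noteq> \<infinity>)"

definition convex_fun :: "('a::real_vector \<Rightarrow> ereal) \<Rightarrow> bool" where
  "convex_fun \<phi> \<longleftrightarrow> (\<forall>x y t. 0 < t \<and> t < 1 \<longrightarrow>
     \<phi> ((1 - t) *\<^sub>R x + t *\<^sub>R y) \<le> ereal (1 - t) * \<phi> x + ereal t * \<phi> y)"

definition lsc_fun :: "('a::topological_space \<Rightarrow> ereal) \<Rightarrow> bool" where
  "lsc_fun \<phi> \<longleftrightarrow> (\<forall>x. \<phi> x \<le> Liminf (at x) \<phi>)"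

definition edom :: "('a \<Rightarrow> ereal) \<Rightarrow> 'a set" where
  "edom \<phi> = {x. \<phi> x < \<infinity>}"

text \<open>Gradient of a real function on a Euclidean space (meaningful where f is differentiable).\<close>
definition grad :: "('a::euclidean_space \<Rightarrow> real) \<Rightarrow> 'a \<Rightarrow> 'a" where
  "grad f x = (THE g. (f has_derivative (\<lambda>h. g \<bullet> h)) (at x))"

definition prox :: "real \<Rightarrow> ('a::euclidean_space \<Rightarrow> ereal) \<Rightarrow> 'a \<Rightarrow> 'a" where
  "prox lam \<phi> x = (THE y. \<forall>w. \<phi> y + ereal (norm (x - y) ^ 2 / (2 * lam))
                            \<le> \<phi> w + ereal (norm (x - w) ^ 2 / (2 * lam)))"

definition grad_env :: "real \<Rightarrow> ('a::euclidean_space \<Rightarrow> ereal) \<Rightarrow> 'a \<Rightarrow> 'a" where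
  "grad_env lam \<phi> x = (1 / lam) *\<^sub>R (x - prox lam \<phi> x)"

definition Fnor :: "('a::euclidean_space \<Rightarrow> real) \<Rightarrow> real \<Rightarrow> ('a \<Rightarrow> ereal) \<Rightarrow> 'a \<Rightarrow> 'a" where
  "Fnor f lam \<phi> z = grad f (prox lam \<phi> z) + (1 / lam) *\<^sub>R (z - prox lam \<phi> z)"

definition Hmerit :: "('a::euclidean_space \<Rightarrow> real) \<Rightarrow> real \<Rightarrow> ('a \<Rightarrow> ereal) \<Rightarrow> real \<Rightarrow> 'a \<Rightarrow> ereal" where
  "Hmerit f lam \<phi> xi z =
     ereal (f (prox lam \<phi> z)) + \<phi> (prox lam \<phi> z)
     + ereal (xi * lam / 2 * norm (Fnor f lam \<phi> z) ^ 2)"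

text \<open>lip g xb = limsup_{x,x' -> xb, x ~= x'} ||g x - g x'|| / ||x - x'||.\<close>
definition lip :: "('a::real_normed_vector \<Rightarrow> 'b::real_normed_vector) \<Rightarrow> 'a \<Rightarrow> ereal" where
  "lip g xb = (INF \<delta>\<in>{0<..}. SUP p\<in>{(x, x'). x \<in> ball xb \<delta> \<and> x' \<in> ball xb \<delta> \<and> x \<noteq> x'}.
                 ereal (norm (g (fst p) - g (snd p)) / norm (fst p - snd p)))"

definition tau :: "(nat \<Rightarrow> real) \<Rightarrow> nat \<Rightarrow> nat \<Rightarrow> real" where
  "tau \<alpha> k n = (\<Sum>i\<in>{k..<n}. \<alpha> i)"

definition varpi :: "(nat \<Rightarrow> real) \<Rightarrow> nat \<Rightarrow> real \<Rightarrow> nat" where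
  "varpi \<alpha> k T = max (k + 1) (Sup {n. k \<le> n \<and> tau \<alpha> k n \<le> T})"

primrec tidx :: "(nat \<Rightarrow> real) \<Rightarrow> real \<Rightarrow> nat \<Rightarrow> nat" where
  "tidx \<alpha> T 0 = 0"
| "tidx \<alpha> T (Suc k) = varpi \<alpha> (tidx \<alpha> T k) T"

definition sagg :: "(nat \<Rightarrow> real) \<Rightarrow> real \<Rightarrow> (nat \<Rightarrow> 'a::real_normed_vector) \<Rightarrow> nat \<Rightarrow> real" where
  "sagg \<alpha> T e k = Max ((\<lambda>j. norm (\<Sum>i\<in>{tidx \<alpha> T k..<j}. \<alpha> i *\<^sub>R e i))
                        ` {tidx \<alpha> T k <.. tidx \<alpha> T (Suc k)})"

end

theory Submission
  imports Defs
begin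

(* Fix a sample path with L finite. A pointwise bound on lip (grad f) propagates along segments,
   so grad f is L-Lipschitz on the convex hull C of the iterates x^k; hence f obeys the descent
   lemma on C, and since the prox is firmly nonexpansive the normal map F is (L + 1/lam)-Lipschitz.
   Over a time window from m_k to m_(k+1), of length t in [19T/20, T] once the steps are small,
   the iterates stay within O(T |F(z^m)| + s_k) of z^m, so z^n - z^m differs from the exact step
   -t F(z^m) by O(s_k + (L + 1/lam) T (T |F(z^m)| + s_k)). The descent lemma, the variational
   inequality of the prox and firm nonexpansiveness give, for any z1, z2,
     H(z2) - H(z1) <= -(xi/4 - O(t)) t |F(z1)|^2 + O(1/t) |z2 - z1 + t F(z1)|^2,
   where xi = 1/(2 + 2 lam^2 L^2) is exactly what absorbs the coupling between F(z1) and the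
   increment of grad f.
   For T small enough the constants become xi T/5 and 5/T. *)

lemma norm_add_square:
  fixes x y :: "'a::real_inner"
  shows "norm (x + y) ^ 2 = norm x ^ 2 + norm y ^ 2 + 2 * inner x y"
  by (simp add: power2_norm_eq_inner inner_add_left inner_add_right inner_commute[of y x])

lemma norm_le_norm_add_if_inner_nonneg:
  fixes x y :: "'a::real_inner"
  assumes "inner x y \<ge> 0"
  shows "norm x \<le> norm (x + y)" and "norm y \<le> norm (x + y)"
proof -
  have "norm x ^ 2 \<le> norm (x + y) ^ 2" "norm y ^ 2 \<le> norm (x + y) ^ 2"
    using assms norm_add_square[of x y] zero_le_power2[of "norm x"] zero_le_power2[of "norm y"]
    by linarith+
  then show "norm x \<le> norm (x + y)" "norm y \<le> norm (x + y)"
    using power2_le_imp_le norm_ge_zero by blast+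
qed

lemma square_sum_le: "((x::real) + y) ^ 2 \<le> 2 * x ^ 2 + 2 * y ^ 2"
  using sum_squares_bound[of x y] by (simp add: power2_sum)

lemma inner_le_half_squares:
  fixes x y :: "'a::real_inner"
  shows "inner x y \<le> norm x ^ 2 / 2 + norm y ^ 2 / 2"
  using norm_cauchy_schwarz[of x y] sum_squares_bound[of "norm x" "norm y"] by linarith

lemma le_if_le_add_small_multiples:
  fixes x y c :: real
  assumes c: "c \<ge> 0" and le: "\<And>t. 0 < t \<Longrightarrow> t < 1 \<Longrightarrow> x \<le> y + t * c"
  shows "x \<le> y"
proof (rule field_le_epsilon)
  fix e :: real assume e: "e > 0"
  define t where "t = min (1 / 2) (e / (c + 1))"
  have t: "0 < t" "t < 1" using c e by (simp_all add: t_def)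
  have "t * c \<le> t * (c + 1)" using t by simp
  also have "\<dots> \<le> e" using c pos_le_divide_eq[of "c + 1" t e] by (simp add: t_def)
  finally show "x \<le> y + e" using le[OF t] by simp
qed

section \<open>Convex functions and the proximal operator\<close>

lemma lsc_fun_eventually_greater:
  assumes "lsc_fun \<phi>" "ereal r < \<phi> (x::'a::metric_space)"
  obtains d where "d > 0" "\<And>y. dist y x < d \<Longrightarrow> ereal r < \<phi> y"
proof -
  have "ereal r < Liminf (at x) \<phi>"
    using assms unfolding lsc_fun_def using order_less_le_trans by blast
  then have "eventually (\<lambda>y. ereal r < \<phi> y) (at x)" by (rule less_LiminfD)
  then obtain d where d: "d > 0" "\<forall>y. y \<noteq> x \<and> dist y x < d \<longrightarrow> ereal r < \<phi> y"
    unfolding eventually_at by auto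
  show ?thesis
  proof (rule that[OF d(1)])
    fix y assume "dist y x < d"
    then show "ereal r < \<phi> y" using d(2) assms(2) by (cases "y = x") auto
  qed
qed

lemma proper_fun_obtain_finite:
  assumes "proper_fun \<phi>"
  obtains y v where "\<phi> y = ereal v"
proof -
  obtain y where "\<phi> y \<noteq> \<infinity>" "\<phi> y \<noteq> -\<infinity>"
    using assms unfolding proper_fun_def by blast
  then show ?thesis using that by (cases "\<phi> y") auto
qed

lemma lsc_fun_add_continuous_sublevel_closed:
  fixes \<phi> :: "'a::metric_space \<Rightarrow> ereal"
  assumes lsc: "lsc_fun \<phi>" and q: "continuous_on UNIV q"
  shows "closed {y. \<phi> y + ereal (q y) \<le> ereal c}"
proof -
  have "open {y. ereal c < \<phi> y + ereal (q y)}"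
    unfolding open_dist
  proof (intro ballI)
    fix y0 assume "y0 \<in> {y. ereal c < \<phi> y + ereal (q y)}"
    then have "ereal (c - q y0) < \<phi> y0" by (cases "\<phi> y0") auto
    then obtain r where r: "c - q y0 < r" "ereal r < \<phi> y0"
      using ereal_dense2 by (metis less_ereal.simps(1))
    obtain d1 where d1: "d1 > 0" "\<And>y. dist y y0 < d1 \<Longrightarrow> ereal r < \<phi> y"
      using lsc_fun_eventually_greater[OF lsc r(2)] by blast
    obtain d2 where d2: "d2 > 0" "\<And>y. dist y y0 < d2 \<Longrightarrow> dist (q y) (q y0) < r - (c - q y0)"
      using q r(1) unfolding continuous_on_iff by (metis UNIV_I diff_gt_0_iff_gt)
    have "ereal c < \<phi> y + ereal (q y)" if "dist y y0 < min d1 d2" for y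
    proof -
      have "ereal r < \<phi> y" "c < r + q y"
        using d1(2)[of y] d2(2)[of y] that by (auto simp: dist_real_def abs_less_iff)
      then show ?thesis by (cases "\<phi> y") auto
    qed
    then show "\<exists>e>0. \<forall>y. dist y y0 < e \<longrightarrow> y \<in> {y. ereal c < \<phi> y + ereal (q y)}"
      using d1(1) d2(1) by (intro exI[of _ "min d1 d2"]) auto
  qed
  then show ?thesis
    by (simp add: closed_def Collect_neg_eq[symmetric] not_le)
qed

text \<open>Cantor's intersection theorem applied to the nested, compact sublevel sets
  at levels decreasing to the infimum.\<close>
lemma closed_sublevels_attain_Inf:
  fixes h :: "'a::heine_borel \<Rightarrow> ereal"
  assumes closed: "\<And>c. closed {y. h y \<le> ereal c}"
    and Inf: "(INF y. h y) = ereal m" and bounded: "bounded {y. h y \<le> ereal (m + 1)}"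
  obtains p where "\<And>w. h p \<le> h w"
proof -
  define S where "S n = {y. h y \<le> ereal (m + 1 / (real n + 1))}" for n :: nat
  have "S n \<noteq> {}" for n
  proof -
    have "(INF y. h y) < ereal (m + 1 / (real n + 1))" using Inf by simp
    then obtain y where "h y < ereal (m + 1 / (real n + 1))" unfolding INF_less_iff by blast
    then show ?thesis using less_imp_le unfolding S_def by blast
  qed
  moreover have "S n \<subseteq> S k" if "k \<le> n" for k n
  proof -
    have "1 / (real n + 1) \<le> 1 / (real k + 1)" using that by (intro divide_left_mono) auto
    then have "ereal (m + 1 / (real n + 1)) \<le> ereal (m + 1 / (real k + 1))" by simp
    then show ?thesis unfolding S_def by (auto elim: order_trans)
  qed
  moreover have "closed (S n)" "bounded (S 0)" for n
    using closed bounded by (simp_all add: S_def)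
  ultimately obtain p where p: "\<And>n. p \<in> S n" using bounded_closed_nest[of S] by blast
  have "h p \<le> ereal m"
  proof (rule ereal_le_epsilon2)
    fix e :: real assume "e > 0"
    then obtain n :: nat where "inverse (real (Suc n)) < e" using reals_Archimedean by blast
    have "h p \<le> ereal (m + 1 / (real n + 1))" using p[of n] by (simp add: S_def)
    also have "\<dots> \<le> ereal m + ereal e"
      using \<open>inverse (real (Suc n)) < e\<close> by (simp add: inverse_eq_divide add.commute)
    finally show "h p \<le> ereal m + ereal e" .
  qed
  then show ?thesis using that INF_lower[of _ UNIV h] Inf by (metis UNIV_I order_trans)
qed

lemma convex_fun_norm_minorant:
  fixes \<phi> :: "'a::real_normed_vector \<Rightarrow> ereal"
  assumes proper: "proper_fun \<phi>" and convex: "convex_fun \<phi>" and lsc: "lsc_fun \<phi>"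
  obtains y0 v a b where "\<phi> y0 = ereal v" "b \<ge> 0" "\<And>y. ereal (a - b * norm (y - y0)) \<le> \<phi> y"
proof -
  obtain y0 v where y0: "\<phi> y0 = ereal v" using proper_fun_obtain_finite[OF proper] .
  obtain \<rho> where \<rho>: "\<rho> > 0" "\<And>y. dist y y0 < \<rho> \<Longrightarrow> ereal (v - 1) < \<phi> y"
    using lsc_fun_eventually_greater[OF lsc, of "v - 1" y0] y0 by auto
  text \<open>Far from y0, compare with the point of the segment to y at distance \<rho>/2 from y0.\<close>
  have "ereal (v - 1 - (2 / \<rho>) * norm (y - y0)) \<le> \<phi> y" for y
  proof (cases "norm (y - y0) < \<rho>")
    case True
    then have "ereal (v - 1) < \<phi> y" using \<rho> by (simp add: dist_norm)
    moreover have "v - 1 - (2 / \<rho>) * norm (y - y0) \<le> v - 1" using \<rho> by simp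
    ultimately show ?thesis by (meson ereal_less_eq(3) le_less_trans less_imp_le)
  next
    case False
    define n where "n = norm (y - y0)"
    define t where "t = \<rho> / (2 * n)"
    have n: "n \<ge> \<rho>" using False by (simp add: n_def)
    have t: "0 < t" "t < 1" using n \<rho> by (auto simp: t_def field_simps)
    define y1 where "y1 = (1 - t) *\<^sub>R y0 + t *\<^sub>R y"
    have "y1 - y0 = t *\<^sub>R (y - y0)" by (simp add: y1_def algebra_simps)
    then have "norm (y1 - y0) = t * n" using t by (simp add: n_def)
    also have "\<dots> = \<rho> / 2" using n \<rho> by (simp add: t_def)
    finally have lower: "ereal (v - 1) < \<phi> y1" using \<rho> by (simp add: dist_norm)
    have upper: "\<phi> y1 \<le> ereal (1 - t) * \<phi> y0 + ereal t * \<phi> y"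
      using convex t unfolding convex_fun_def y1_def by blast
    show ?thesis
    proof (cases "\<phi> y")
      case (real w)
      then have "v - 1 < (1 - t) * v + t * w" using order_less_le_trans[OF lower upper] y0 by simp
      then have "v - 1 / t < w" using t by (simp add: field_simps)
      moreover have "1 / t = (2 / \<rho>) * n" using \<rho> n by (simp add: t_def field_simps)
      ultimately show ?thesis using real by (simp add: n_def)
    next
      case MInf then show ?thesis using proper unfolding proper_fun_def by auto
    qed simp
  qed
  with y0 \<rho>(1) show ?thesis by (intro that[of y0 v "2 / \<rho>" "v - 1"]) auto
qed

lemma convex_edom:
  fixes \<phi> :: "'a::real_vector \<Rightarrow> ereal"
  assumes "convex_fun \<phi>"
  shows "convex (edom \<phi>)"
proof (rule convexI)
  fix x y and u v :: real assume xy: "x \<in> edom \<phi>" "y \<in> edom \<phi>" and uv: "0 \<le> u" "0 \<le> v" "u + v = 1"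
  show "u *\<^sub>R x + v *\<^sub>R y \<in> edom \<phi>"
  proof (cases "0 < v \<and> v < 1")
    case True
    have "\<phi> (u *\<^sub>R x + v *\<^sub>R y) \<le> ereal u * \<phi> x + ereal v * \<phi> y"
      using assms True uv(3) unfolding convex_fun_def by (metis add_diff_cancel_right')
    also have "\<dots> < \<infinity>" using xy True uv unfolding edom_def
      by (cases "\<phi> x"; cases "\<phi> y") auto
    finally show ?thesis by (simp add: edom_def)
  next
    case False
    then have "v = 0 \<and> u = 1 \<or> v = 1 \<and> u = 0" using uv by auto
    then show ?thesis using xy by auto
  qed
qed

definition is_prox :: "real \<Rightarrow> ('a::real_normed_vector \<Rightarrow> ereal) \<Rightarrow> 'a \<Rightarrow> 'a \<Rightarrow> bool" where
  "is_prox lam \<phi> z p \<longleftrightarrow> (\<forall>w. \<phi> p + ereal (norm (z - p) ^ 2 / (2 * lam))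
                            \<le> \<phi> w + ereal (norm (z - w) ^ 2 / (2 * lam)))"

lemma prox_eq_The_is_prox: "prox lam \<phi> z = (THE p. is_prox lam \<phi> z p)"
  unfolding prox_def is_prox_def ..

lemma prox_objective_quadratic_growth:
  fixes \<phi> :: "'a::real_normed_vector \<Rightarrow> ereal"
  assumes lam: "lam > 0" and b: "b \<ge> 0" and minorant: "\<And>y. ereal (a - b * norm (y - y0)) \<le> \<phi> y"
  shows "ereal (a - b * norm (z - y0) - lam * b ^ 2 + norm (z - y) ^ 2 / (4 * lam))
         \<le> \<phi> y + ereal (norm (z - y) ^ 2 / (2 * lam))"
proof -
  define r d where "r = norm (z - y)" and "d = norm (z - y0)"
  have "norm (y - y0) \<le> r + d"
    using norm_triangle_ineq4[of "z - y0" "z - y"] by (simp add: r_def d_def add.commute)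
  then have "a - b * (r + d) \<le> a - b * norm (y - y0)" using b by (simp add: mult_left_mono)
  moreover have "b * r \<le> r ^ 2 / (4 * lam) + lam * b ^ 2"
  proof -
    have "0 \<le> (r - 2 * lam * b) ^ 2 / (4 * lam)" using lam by simp
    also have "\<dots> = r ^ 2 / (4 * lam) + lam * b ^ 2 - b * r"
      using lam by (simp add: field_simps power2_eq_square)
    finally show ?thesis by simp
  qed
  moreover have "r ^ 2 / (2 * lam) = r ^ 2 / (4 * lam) + r ^ 2 / (4 * lam)" by simp
  ultimately have "a - b * d - lam * b ^ 2 + r ^ 2 / (4 * lam)
      \<le> a - b * norm (y - y0) + r ^ 2 / (2 * lam)"
    unfolding distrib_left by linarith
  then have "ereal (a - b * d - lam * b ^ 2 + r ^ 2 / (4 * lam))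
      \<le> ereal (a - b * norm (y - y0)) + ereal (r ^ 2 / (2 * lam))" by simp
  also have "\<dots> \<le> \<phi> y + ereal (r ^ 2 / (2 * lam))" by (rule add_right_mono[OF minorant])
  finally show ?thesis by (simp add: r_def d_def)
qed

lemma is_prox_exists:
  fixes \<phi> :: "'a::euclidean_space \<Rightarrow> ereal"
  assumes proper: "proper_fun \<phi>" and convex: "convex_fun \<phi>" and lsc: "lsc_fun \<phi>"
    and lam: "lam > 0"
  obtains p where "is_prox lam \<phi> z p"
proof -
  obtain y0 v a b where y0: "\<phi> y0 = ereal v" and b: "b \<ge> 0"
    and minorant: "\<And>y. ereal (a - b * norm (y - y0)) \<le> \<phi> y"
    using convex_fun_norm_minorant[OF proper convex lsc] by metis
  define h where "h y = \<phi> y + ereal (norm (z - y) ^ 2 / (2 * lam))" for y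
  define d where "d = norm (z - y0)"
  define c where "c = a - b * d - lam * b ^ 2"
  have growth: "ereal (c + norm (z - y) ^ 2 / (4 * lam)) \<le> h y" for y
    unfolding c_def d_def h_def by (rule prox_objective_quadratic_growth[OF lam b minorant])
  have "(INF y. h y) \<le> ereal (v + d ^ 2 / (2 * lam))"
    using INF_lower[of y0 UNIV h] by (simp add: h_def y0 d_def)
  moreover have "ereal c \<le> (INF y. h y)"
  proof (rule INF_greatest)
    fix y
    have "c \<le> c + norm (z - y) ^ 2 / (4 * lam)" using lam by simp
    then show "ereal c \<le> h y" using growth[of y] by (meson ereal_less_eq(3) order_trans)
  qed
  ultimately obtain m where m: "(INF y. h y) = ereal m"
    by (cases "INF y. h y") auto
  have bounded: "bounded {y. h y \<le> ereal (m + 1)}"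
  proof -
    have "{y. h y \<le> ereal (m + 1)} \<subseteq> cball z (sqrt (4 * lam * (m + 1 - c)))"
    proof
      fix y assume "y \<in> {y. h y \<le> ereal (m + 1)}"
      then have "ereal (c + norm (z - y) ^ 2 / (4 * lam)) \<le> ereal (m + 1)"
        using growth[of y] by (meson mem_Collect_eq order_trans)
      then have "c + norm (z - y) ^ 2 / (4 * lam) \<le> m + 1" by simp
      then have "norm (z - y) ^ 2 \<le> 4 * lam * (m + 1 - c)" using lam by (simp add: field_simps)
      then show "y \<in> cball z (sqrt (4 * lam * (m + 1 - c)))"
        by (simp add: dist_norm real_le_rsqrt)
    qed
    then show ?thesis using bounded_cball bounded_subset by blast
  qed
  have closed: "closed {y. h y \<le> ereal c'}" for c'
    unfolding h_def by (rule lsc_fun_add_continuous_sublevel_closed[OF lsc])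
      (use lam in \<open>auto intro!: continuous_intros\<close>)
  obtain p where "\<And>w. h p \<le> h w" by (metis closed_sublevels_attain_Inf[OF closed m bounded])
  then have "is_prox lam \<phi> z p" unfolding is_prox_def h_def by (rule allI)
  then show ?thesis by (rule that)
qed

lemma is_prox_finite:
  assumes proper: "proper_fun \<phi>" and "is_prox lam \<phi> z p"
  obtains v where "\<phi> p = ereal v"
proof -
  obtain y v where "\<phi> y = ereal v" using proper_fun_obtain_finite[OF proper] .
  then have "\<phi> p + ereal (norm (z - p) ^ 2 / (2 * lam)) \<le> ereal (v + norm (z - y) ^ 2 / (2 * lam))"
    using assms(2) unfolding is_prox_def by (metis plus_ereal.simps(1))
  then have "\<phi> p \<noteq> \<infinity>" by auto
  moreover have "\<phi> p \<noteq> -\<infinity>" using proper unfolding proper_fun_def by auto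
  ultimately show ?thesis using that by (cases "\<phi> p") auto
qed

text \<open>Compare p with the points (1 - t) p + t w and let t tend to 0.\<close>
lemma is_prox_variational_inequality:
  fixes \<phi> :: "'a::real_inner \<Rightarrow> ereal"
  assumes proper: "proper_fun \<phi>" and convex: "convex_fun \<phi>" and lam: "lam > 0"
    and prox: "is_prox lam \<phi> z p"
  shows "\<phi> p + ereal (inner (z - p) (w - p) / lam) \<le> \<phi> w"
proof -
  obtain pv where pv: "\<phi> p = ereal pv" using is_prox_finite[OF proper prox] .
  show ?thesis
  proof (cases "\<phi> w")
    case (real wv)
    define u where "u = z - p"
    define v where "v = w - p"
    have bound: "pv + inner u v / lam \<le> wv + t * (norm v ^ 2 / (2 * lam))"
      if t: "0 < t" "t < 1" for t
    proof -
      define wt where "wt = (1 - t) *\<^sub>R p + t *\<^sub>R w"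
      have "z - wt = u + - (t *\<^sub>R v)" by (simp add: wt_def u_def v_def algebra_simps)
      then have dist_wt: "norm (z - wt) ^ 2 = norm u ^ 2 - 2 * t * inner u v + t ^ 2 * norm v ^ 2"
        using norm_add_square[of u "- (t *\<^sub>R v)"] by (simp add: power_mult_distrib)
      have "\<phi> wt \<le> ereal (1 - t) * \<phi> p + ereal t * \<phi> w"
        using convex t unfolding convex_fun_def wt_def by blast
      then have convex_wt: "\<phi> wt \<le> ereal ((1 - t) * pv + t * wv)" using pv real by simp
      have "ereal (pv + norm u ^ 2 / (2 * lam)) \<le> \<phi> wt + ereal (norm (z - wt) ^ 2 / (2 * lam))"
        using prox pv unfolding is_prox_def u_def by (metis plus_ereal.simps(1))
      also have "\<dots> \<le> ereal ((1 - t) * pv + t * wv) + ereal (norm (z - wt) ^ 2 / (2 * lam))"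
        using convex_wt by (rule add_right_mono)
      finally have "pv + norm u ^ 2 / (2 * lam)
          \<le> (1 - t) * pv + t * wv + norm (z - wt) ^ 2 / (2 * lam)" by simp
      then have "t * (pv + inner u v / lam) \<le> t * (wv + t * (norm v ^ 2 / (2 * lam)))"
        using lam unfolding dist_wt by (simp add: field_simps power2_eq_square)
      then show ?thesis using t by simp
    qed
    have "pv + inner u v / lam \<le> wv"
      using lam by (intro le_if_le_add_small_multiples[OF _ bound]) simp
    then show ?thesis using pv real by (simp add: u_def v_def)
  next
    case MInf then show ?thesis using proper unfolding proper_fun_def by simp
  qed simp
qed

lemma is_prox_unique:
  fixes \<phi> :: "'a::real_inner \<Rightarrow> ereal"
  assumes proper: "proper_fun \<phi>" and convex: "convex_fun \<phi>" and lam: "lam > 0"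
    and p1: "is_prox lam \<phi> z p1" and p2: "is_prox lam \<phi> z p2"
  shows "p1 = p2"
proof -
  obtain v1 where v1: "\<phi> p1 = ereal v1" using is_prox_finite[OF proper p1] .
  obtain v2 where v2: "\<phi> p2 = ereal v2" using is_prox_finite[OF proper p2] .
  have "v1 + inner (z - p1) (p2 - p1) / lam \<le> v2" "v2 + inner (z - p2) (p1 - p2) / lam \<le> v1"
    using is_prox_variational_inequality[OF proper convex lam p1, of p2]
      is_prox_variational_inequality[OF proper convex lam p2, of p1] v1 v2 by simp_all
  moreover have "norm (p1 - p2) ^ 2 = inner (z - p1) (p2 - p1) + inner (z - p2) (p1 - p2)"
    by (simp add: power2_norm_eq_inner inner_diff_left inner_diff_right inner_commute)
  ultimately have "norm (p1 - p2) ^ 2 / lam \<le> 0" by (simp add: add_divide_distrib)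
  then show ?thesis using lam by (simp add: divide_le_0_iff)
qed

lemma prox_is_prox:
  fixes \<phi> :: "'a::euclidean_space \<Rightarrow> ereal"
  assumes proper: "proper_fun \<phi>" and convex: "convex_fun \<phi>" and lsc: "lsc_fun \<phi>"
    and lam: "lam > 0"
  shows "is_prox lam \<phi> z (prox lam \<phi> z)"
proof -
  obtain p where p: "is_prox lam \<phi> z p" using is_prox_exists[OF proper convex lsc lam] .
  then have "prox lam \<phi> z = p"
    unfolding prox_eq_The_is_prox using is_prox_unique[OF proper convex lam _ p] by blast
  with p show ?thesis by simp
qed

lemma prox_finite:
  fixes \<phi> :: "'a::euclidean_space \<Rightarrow> ereal"
  assumes "proper_fun \<phi>" "convex_fun \<phi>" "lsc_fun \<phi>" "lam > 0"
  obtains v where "\<phi> (prox lam \<phi> z) = ereal v"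
  using is_prox_finite[OF assms(1) prox_is_prox[OF assms]] .

lemma prox_variational_inequality:
  fixes \<phi> :: "'a::euclidean_space \<Rightarrow> ereal"
  assumes "proper_fun \<phi>" "convex_fun \<phi>" "lsc_fun \<phi>" "lam > 0"
  shows "\<phi> (prox lam \<phi> z) + ereal (inner (z - prox lam \<phi> z) (w - prox lam \<phi> z) / lam) \<le> \<phi> w"
  using is_prox_variational_inequality[OF assms(1,2,4) prox_is_prox[OF assms]] .

lemma prox_firmly_nonexpansive:
  fixes \<phi> :: "'a::euclidean_space \<Rightarrow> ereal"
  assumes "proper_fun \<phi>" "convex_fun \<phi>" "lsc_fun \<phi>" "lam > 0"
  shows "inner (prox lam \<phi> z1 - prox lam \<phi> z2)
           ((z1 - prox lam \<phi> z1) - (z2 - prox lam \<phi> z2)) \<ge> 0"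
proof -
  define p1 p2 where "p1 = prox lam \<phi> z1" and "p2 = prox lam \<phi> z2"
  obtain v1 where v1: "\<phi> p1 = ereal v1" using prox_finite[OF assms] p1_def by metis
  obtain v2 where v2: "\<phi> p2 = ereal v2" using prox_finite[OF assms] p2_def by metis
  have "v1 + inner (z1 - p1) (p2 - p1) / lam \<le> v2" "v2 + inner (z2 - p2) (p1 - p2) / lam \<le> v1"
    using prox_variational_inequality[OF assms, of z1 p2]
      prox_variational_inequality[OF assms, of z2 p1]
      v1 v2 p1_def p2_def by simp_all
  then have "(inner (z1 - p1) (p2 - p1) + inner (z2 - p2) (p1 - p2)) / lam \<le> 0"
    by (simp add: add_divide_distrib)
  moreover have "inner (z1 - p1) (p2 - p1) + inner (z2 - p2) (p1 - p2)
      = - inner (p1 - p2) ((z1 - p1) - (z2 - p2))"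
    by (simp add: inner_diff_left inner_diff_right inner_commute)
  ultimately show ?thesis using assms(4) by (simp add: p1_def p2_def divide_le_0_iff)
qed

lemma prox_nonexpansive:
  fixes \<phi> :: "'a::euclidean_space \<Rightarrow> ereal"
  assumes "proper_fun \<phi>" "convex_fun \<phi>" "lsc_fun \<phi>" "lam > 0"
  shows "norm (prox lam \<phi> z1 - prox lam \<phi> z2) \<le> norm (z1 - z2)"
    and "norm ((z1 - prox lam \<phi> z1) - (z2 - prox lam \<phi> z2)) \<le> norm (z1 - z2)"
  using norm_le_norm_add_if_inner_nonneg[OF prox_firmly_nonexpansive[OF assms, of z1 z2]]
  by (simp_all add: algebra_simps)

lemma convex_hull_prox_subset_edom:
  fixes \<phi> :: "'a::euclidean_space \<Rightarrow> ereal"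
  assumes "proper_fun \<phi>" "convex_fun \<phi>" "lsc_fun \<phi>" "lam > 0"
  shows "convex hull (range (\<lambda>k. prox lam \<phi> (w k))) \<subseteq> edom \<phi>"
proof (rule hull_minimal)
  show "range (\<lambda>k. prox lam \<phi> (w k)) \<subseteq> edom \<phi>"
  proof clarify
    fix k
    obtain v where "\<phi> (prox lam \<phi> (w k)) = ereal v" by (rule prox_finite[OF assms])
    then show "prox lam \<phi> (w k) \<in> edom \<phi>" by (simp add: edom_def)
  qed
qed (rule convex_edom[OF assms(2)])

section \<open>Lipschitz gradients on convex sets\<close>

lemma lip_less_imp_lipschitz_on_ball:
  fixes g :: "'a::real_normed_vector \<Rightarrow> 'b::real_normed_vector"
  assumes "lip g c < ereal M" "M \<ge> 0"
  obtains \<delta> where "\<delta> > 0" "M-lipschitz_on (ball c \<delta>) g"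
proof -
  obtain \<delta> where \<delta>: "\<delta> > 0"
    "(SUP p\<in>{(x, x'). x \<in> ball c \<delta> \<and> x' \<in> ball c \<delta> \<and> x \<noteq> x'}.
        ereal (norm (g (fst p) - g (snd p)) / norm (fst p - snd p))) < ereal M"
    using assms(1) unfolding lip_def INF_less_iff by auto
  have "dist (g x) (g x') \<le> M * dist x x'" if "x \<in> ball c \<delta>" "x' \<in> ball c \<delta>" for x x'
  proof (cases "x = x'")
    case False
    have "ereal (norm (g x - g x') / norm (x - x')) < ereal M"
      using that False by (intro le_less_trans[OF _ \<delta>(2)]) (force intro: SUP_upper2)
    then show ?thesis using False by (simp add: dist_norm pos_divide_less_eq less_imp_le)
  qed simp
  then show ?thesis using that \<delta>(1) assms(2) by (blast intro: lipschitz_onI)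
qed

text \<open>Local Lipschitz bounds propagate along segments, by the connectedness argument
  of the library lemma locally_lipschitz_imp_lipschitz.\<close>
lemma lipschitz_on_convex_if_locally_lipschitz:
  fixes g :: "'a::real_normed_vector \<Rightarrow> 'b::metric_space"
  assumes C: "convex C" and local: "\<And>c. c \<in> C \<Longrightarrow> \<exists>\<delta>>0. M-lipschitz_on (ball c \<delta>) g"
    and M: "M \<ge> 0"
  shows "M-lipschitz_on C g"
proof (rule lipschitz_onI[OF _ M])
  fix a b assume ab: "a \<in> C" "b \<in> C"
  define \<gamma> where "\<gamma> t = a + t *\<^sub>R (b - a)" for t :: real
  have "\<gamma> t \<in> C" if "t \<in> {0..1}" for t
    using convexD_alt[OF C ab, of t] that by (simp add: \<gamma>_def algebra_simps)
  then have "\<exists>\<delta>>0. M-lipschitz_on (ball (\<gamma> t) \<delta>) g" if "t \<in> {0..1}" for t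
    using local that by blast
  then obtain \<delta> where \<delta>: "\<And>t. t \<in> {0..1} \<Longrightarrow> \<delta> t > 0"
    "\<And>t. t \<in> {0..1} \<Longrightarrow> M-lipschitz_on (ball (\<gamma> t) (\<delta> t)) g"
    by metis
  define n where "n = norm (b - a) + 1"
  have n: "norm (b - a) < n" "n > 0" unfolding n_def using norm_ge_zero[of "b - a"] by linarith+
  have "(M * norm (b - a))-lipschitz_on {0..1} (g \<circ> \<gamma>)"
  proof (rule locally_lipschitz_imp_lipschitz)
    have "isCont g (\<gamma> t)" if t: "t \<in> {0..1}" for t
      using lipschitz_on_continuous_on[OF \<delta>(2)[OF t]] \<delta>(1)[OF t]
      by (intro continuous_on_interior) auto
    then show "continuous_on {0..1} (g \<circ> \<gamma>)"
      unfolding \<gamma>_def by (intro continuous_at_imp_continuous_on ballI continuous_intros) auto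
  next
    fix s t :: real assume s: "s \<in> {0..<1}" and "s < t"
    define r where "r = min t (s + \<delta> s / n)"
    have "s < r" using \<open>s < t\<close> \<delta>(1)[of s] s n by (simp add: r_def)
    have "\<gamma> r - \<gamma> s = (r - s) *\<^sub>R (b - a)" by (simp add: \<gamma>_def algebra_simps)
    then have dist_rs: "dist (\<gamma> r) (\<gamma> s) = (r - s) * norm (b - a)"
      using \<open>s < r\<close> by (simp add: dist_norm)
    have "(r - s) * norm (b - a) \<le> \<delta> s / n * norm (b - a)"
      using \<open>s < r\<close> by (intro mult_right_mono) (auto simp: r_def)
    also have "\<dots> < \<delta> s" using \<delta>(1)[of s] s n by (simp add: field_simps)
    finally have "\<gamma> r \<in> ball (\<gamma> s) (\<delta> s)" "\<gamma> s \<in> ball (\<gamma> s) (\<delta> s)"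
      using dist_rs \<delta>(1)[of s] s by (simp_all add: dist_commute)
    then have "dist (g (\<gamma> r)) (g (\<gamma> s)) \<le> M * dist (\<gamma> r) (\<gamma> s)"
      using lipschitz_onD[OF \<delta>(2)[of s]] s by simp
    then show "\<exists>r\<in>{s<..t}. dist ((g \<circ> \<gamma>) r) ((g \<circ> \<gamma>) s) \<le> M * norm (b - a) * (r - s)"
      using \<open>s < r\<close> dist_rs by (intro bexI[of _ r]) (auto simp: r_def mult_ac)
  qed (use M in simp)
  then have "dist ((g \<circ> \<gamma>) 1) ((g \<circ> \<gamma>) 0) \<le> M * norm (b - a) * dist 1 (0::real)"
    by (rule lipschitz_onD) auto
  then show "dist (g a) (g b) \<le> M * dist a b"
    by (simp add: \<gamma>_def dist_commute dist_norm norm_minus_commute)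
qed

lemma lipschitz_on_convex_if_lip_le:
  fixes g :: "'a::real_normed_vector \<Rightarrow> 'b::real_normed_vector"
  assumes C: "convex C" and lip: "\<And>c. c \<in> C \<Longrightarrow> lip g c \<le> ereal L" and L: "L \<ge> 0"
  shows "L-lipschitz_on C g"
proof (rule lipschitz_onI[OF _ L])
  fix a b assume ab: "a \<in> C" "b \<in> C"
  show "dist (g a) (g b) \<le> L * dist a b"
  proof (rule field_le_epsilon)
    fix e :: real assume e: "e > 0"
    have d: "dist a b + 1 > 0" using zero_le_dist[of a b] by linarith
    define M where "M = L + e / (dist a b + 1)"
    have M: "L < M" using e d by (simp add: M_def)
    have "\<exists>\<delta>>0. M-lipschitz_on (ball c \<delta>) g" if "c \<in> C" for c
      using lip_less_imp_lipschitz_on_ball[of g c M] lip[OF that] M L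
      by (metis ereal_less_eq(3) le_less_trans less_ereal.simps(1) less_imp_le)
    then have "M-lipschitz_on C g"
      using M L by (intro lipschitz_on_convex_if_locally_lipschitz[OF C]) auto
    then have "dist (g a) (g b) \<le> L * dist a b + e / (dist a b + 1) * dist a b"
      using lipschitz_onD ab by (fastforce simp: M_def distrib_right)
    also have "e / (dist a b + 1) * dist a b \<le> e"
      using e d by (simp add: field_simps)
    finally show "dist (g a) (g b) \<le> L * dist a b + e" by simp
  qed
qed

lemma lipschitz_on_convex_hull_if_SUP_lip_finite:
  fixes g :: "'a::real_normed_vector \<Rightarrow> 'b::real_normed_vector"
  assumes "(SUP c\<in>closure (convex hull S). lip g c) < \<infinity>"
  shows "\<bar>real_of_ereal (SUP c\<in>closure (convex hull S). lip g c)\<bar>-lipschitz_on (convex hull S) g"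
proof (rule lipschitz_on_convex_if_lip_le)
  fix c assume "c \<in> convex hull S"
  then have "lip g c \<le> (SUP c\<in>closure (convex hull S). lip g c)"
    by (intro SUP_upper) (use closure_subset in blast)
  also have "\<dots> \<le> ereal \<bar>real_of_ereal (SUP c\<in>closure (convex hull S). lip g c)\<bar>"
    using assms by (cases "SUP c\<in>closure (convex hull S). lip g c") auto
  finally show "lip g c \<le> ereal \<bar>real_of_ereal (SUP c\<in>closure (convex hull S). lip g c)\<bar>" .
qed (simp, rule abs_ge_zero)

lemma descent_lemma:
  fixes f :: "'a::real_inner \<Rightarrow> real" and G :: "'a \<Rightarrow> 'a"
  assumes C: "convex C" "a \<in> C" "b \<in> C"
    and deriv: "\<And>u. u \<in> C \<Longrightarrow> (f has_derivative (\<lambda>h. G u \<bullet> h)) (at u)"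
    and lipschitz: "L-lipschitz_on C G"
  shows "f b \<le> f a + G a \<bullet> (b - a) + L / 2 * norm (b - a) ^ 2"
proof -
  define d where "d = b - a"
  define \<psi> where "\<psi> t = f (a + t *\<^sub>R d) - t * (G a \<bullet> d) - L / 2 * t ^ 2 * norm d ^ 2" for t
  have "\<psi> 1 \<le> \<psi> 0"
  proof (rule DERIV_nonpos_imp_nonincreasing[of 0 1 \<psi>])
    fix t :: real assume t: "0 \<le> t" "t \<le> 1"
    define u where "u = a + t *\<^sub>R d"
    have "u \<in> C" using convexD_alt[OF C, of t] t by (simp add: u_def d_def algebra_simps)
    have "((\<lambda>t. a + t *\<^sub>R d) has_derivative (\<lambda>s. s *\<^sub>R d)) (at t)"
      by (auto intro!: derivative_eq_intros)
    from has_derivative_compose[OF this deriv[OF \<open>u \<in> C\<close>, unfolded u_def]]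
    have "((\<lambda>t. f (a + t *\<^sub>R d)) has_derivative (\<lambda>s. G u \<bullet> (s *\<^sub>R d))) (at t)"
      by (simp add: u_def)
    moreover have "(\<lambda>s. G u \<bullet> (s *\<^sub>R d)) = (*) (G u \<bullet> d)" by (auto simp: fun_eq_iff)
    ultimately have "((\<lambda>t. f (a + t *\<^sub>R d)) has_real_derivative G u \<bullet> d) (at t)"
      unfolding has_field_derivative_def by simp
    then have "(\<psi> has_real_derivative G u \<bullet> d - G a \<bullet> d - L / 2 * (2 * t) * norm d ^ 2) (at t)"
      unfolding \<psi>_def by (auto intro!: derivative_eq_intros)
    moreover have "G u \<bullet> d - G a \<bullet> d \<le> L / 2 * (2 * t) * norm d ^ 2"
    proof -
      have "G u \<bullet> d - G a \<bullet> d \<le> norm (G u - G a) * norm d"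
        using norm_cauchy_schwarz[of "G u - G a" d] by (simp add: inner_diff_left)
      also have "\<dots> \<le> L * norm (u - a) * norm d"
        using lipschitz_on_normD[OF lipschitz \<open>u \<in> C\<close> C(2)] by (simp add: mult_right_mono)
      also have "\<dots> = L / 2 * (2 * t) * norm d ^ 2" using t by (simp add: u_def power2_eq_square)
      finally show ?thesis .
    qed
    ultimately show "\<exists>y. (\<psi> has_real_derivative y) (at t) \<and> y \<le> 0" by force
  qed simp
  then show ?thesis by (simp add: \<psi>_def d_def)
qed

section \<open>The merit function\<close>

lemma merit_weight_bounds:
  fixes lam L :: real
  shows "0 < 1 / (2 + 2 * lam ^ 2 * L ^ 2)" and "1 / (2 + 2 * lam ^ 2 * L ^ 2) \<le> 1 / 2"
  using add_pos_nonneg[of 2 "2 * lam ^ 2 * L ^ 2"] by (auto simp: field_simps)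

text \<open>In the following lemmas a and b are the increments of prox z and of z - prox z over one
  window, F is the normal map at its start, G the increment of grad f, and E the deviation of the
  window from the exact step - t F.\<close>
lemma merit_remainder_bound:
  fixes a b G :: "'a::real_inner"
  assumes lam: "lam > 0" and L: "L \<ge> 0" and xi: "0 \<le> xi" "xi \<le> 1 / 2"
    and mono: "inner a b \<ge> 0" and G: "norm G \<le> L * norm a"
  shows "inner a b / lam + L / 2 * norm a ^ 2 + xi * lam / 2 * norm (G + (1 / lam) *\<^sub>R b) ^ 2
         \<le> (L / 2 + lam * L ^ 2 / 2 + 1 / lam) * norm (a + b) ^ 2"
proof -
  define d where "d = norm (a + b) ^ 2"
  have d: "d = norm a ^ 2 + norm b ^ 2 + 2 * inner a b" unfolding d_def by (rule norm_add_square)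
  have "norm (G + (1 / lam) *\<^sub>R b) \<le> L * norm a + norm b / lam"
    using norm_triangle_ineq[of G "(1 / lam) *\<^sub>R b"] G lam by simp
  then have "norm (G + (1 / lam) *\<^sub>R b) ^ 2 \<le> (L * norm a + norm b / lam) ^ 2"
    by (rule power_mono) simp
  also have "\<dots> \<le> 2 * (L ^ 2 * norm a ^ 2) + 2 * (norm b ^ 2 / lam ^ 2)"
    using square_sum_le[of "L * norm a" "norm b / lam"]
    by (simp add: power_mult_distrib power_divide)
  finally have "xi * lam / 2 * norm (G + (1 / lam) *\<^sub>R b) ^ 2
      \<le> 1 / 2 * lam / 2 * (2 * (L ^ 2 * norm a ^ 2) + 2 * (norm b ^ 2 / lam ^ 2))"
    using xi lam by (intro mult_mono) auto
  also have "\<dots> = lam * L ^ 2 / 2 * norm a ^ 2 + norm b ^ 2 / (2 * lam)"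
    using lam by (simp add: field_simps power2_eq_square)
  also have "\<dots> \<le> lam * L ^ 2 / 2 * d + d / (2 * lam)"
    using d mono lam by (intro add_mono mult_left_mono divide_right_mono) auto
  finally have "xi * lam / 2 * norm (G + (1 / lam) *\<^sub>R b) ^ 2
      \<le> lam * L ^ 2 / 2 * d + d / (2 * lam)" .
  moreover have "inner a b / lam \<le> d / (2 * lam)"
    using d lam by (simp add: field_simps)
  moreover have "L / 2 * norm a ^ 2 \<le> L / 2 * d"
    using d mono L by (intro mult_left_mono) auto
  moreover have "d / (2 * lam) + L / 2 * d + (lam * L ^ 2 / 2 * d + d / (2 * lam))
      = (L / 2 + lam * L ^ 2 / 2 + 1 / lam) * d"
    using lam by (simp add: field_simps)
  ultimately show ?thesis unfolding d_def[symmetric] by linarith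
qed

text \<open>The choice of xi is exactly what makes the coupling term xi lam t <F, G> absorbable:
  it gives 2 xi lam^2 L^2 = 1 - 2 xi.\<close>
lemma merit_coupling_term_bound:
  fixes a F G :: "'a::real_inner"
  assumes lam: "lam > 0" and t: "t \<ge> 0" and xi: "xi = 1 / (2 + 2 * lam ^ 2 * L ^ 2)"
    and G: "norm G \<le> L * norm a"
  shows "xi * lam * t * inner F G
         \<le> norm a ^ 2 / 2 - xi * norm a ^ 2 / 2 + xi * t ^ 2 * norm F ^ 2 / 4"
proof -
  have xi0: "0 < xi" "xi \<le> 1 / 2" unfolding xi by (rule merit_weight_bounds)+
  have xi_key: "2 * xi * lam ^ 2 * L ^ 2 = 1 - 2 * xi"
    using merit_weight_bounds(1)[of lam L] unfolding xi by (simp add: field_simps)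
  define c where "c = xi * lam * L * t * norm F"
  have "xi * lam * t * inner F G \<le> xi * lam * t * (norm F * (L * norm a))"
    using norm_cauchy_schwarz[of F G] G xi0 lam t
    by (intro mult_left_mono order_trans[OF _ mult_left_mono[OF G]]) auto
  also have "\<dots> = c * norm a" by (simp add: c_def)
  also have "\<dots> \<le> (1 - xi) * norm a ^ 2 / 2 + c ^ 2 / (2 * (1 - xi))"
  proof -
    have "0 \<le> ((1 - xi) * norm a - c) ^ 2 / (2 * (1 - xi))" using xi0 by simp
    also have "\<dots> = (1 - xi) * norm a ^ 2 / 2 + c ^ 2 / (2 * (1 - xi)) - c * norm a"
      using xi0 by (simp add: field_simps power2_eq_square)
    finally show ?thesis by simp
  qed
  also have "c ^ 2 / (2 * (1 - xi)) \<le> xi * t ^ 2 * norm F ^ 2 / 4"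
  proof -
    have "c ^ 2 = xi * (2 * xi * lam ^ 2 * L ^ 2) * t ^ 2 * norm F ^ 2 / 2"
      by (simp add: c_def power_mult_distrib power2_eq_square)
    also have "\<dots> \<le> xi * (1 - xi) * t ^ 2 * norm F ^ 2 / 2"
      unfolding xi_key using xi0 by (intro divide_right_mono mult_right_mono mult_left_mono) auto
    finally show ?thesis using xi0 by (simp add: field_simps)
  qed
  finally show ?thesis by (simp add: field_simps)
qed

lemma merit_cross_terms_bound:
  fixes a b E F G :: "'a::real_inner"
  assumes lam: "lam > 0" and L: "L \<ge> 0" and t: "t \<ge> 0"
    and xi: "xi = 1 / (2 + 2 * lam ^ 2 * L ^ 2)"
    and step: "a + b = - (t *\<^sub>R F + E)" and mono: "inner a b \<ge> 0" and G: "norm G \<le> L * norm a"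
  shows "t * inner F a + xi * t * inner F b + xi * lam * t * inner F G
         \<le> norm E ^ 2 / 2 - xi * t ^ 2 * norm F ^ 2 / 4"
proof -
  have xi0: "0 < xi" "xi \<le> 1 / 2" unfolding xi by (rule merit_weight_bounds)+
  have Fa: "t * inner F a = - (norm a ^ 2) - inner a b - inner E a"
    using arg_cong[OF step, of "\<lambda>v. inner v a"]
    by (simp add: inner_add_right inner_diff_right power2_norm_eq_inner inner_commute algebra_simps)
  have "t * inner F b = - inner a b - norm b ^ 2 - inner E b"
    using arg_cong[OF step, of "\<lambda>v. inner v b"]
    by (simp add: inner_add_right inner_diff_right power2_norm_eq_inner inner_commute algebra_simps)
  from arg_cong[OF this, of "(*) xi"]
  have Fb: "xi * t * inner F b = - (xi * inner a b) - xi * norm b ^ 2 - xi * inner E b"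
    by (simp add: algebra_simps)
  have "norm (a + b) ^ 2 + inner E (a + b) = t ^ 2 * norm F ^ 2 + t * inner E F"
  proof -
    have "norm (t *\<^sub>R F + E) ^ 2 = t ^ 2 * norm F ^ 2 + norm E ^ 2 + 2 * (t * inner E F)"
      using norm_add_square[of "t *\<^sub>R F" E] by (simp add: power_mult_distrib inner_commute)
    moreover have "inner E (t *\<^sub>R F + E) = t * inner E F + norm E ^ 2"
      by (simp add: inner_add_right power2_norm_eq_inner)
    ultimately show ?thesis unfolding step norm_minus_cancel inner_minus_right by linarith
  qed
  from arg_cong[OF this, of "(*) xi"]
  have FE: "xi * norm a ^ 2 + xi * norm b ^ 2 + 2 * (xi * inner a b) + xi * inner E a
      + xi * inner E b = xi * t ^ 2 * norm F ^ 2 + xi * t * inner E F"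
    unfolding norm_add_square inner_add_right by (simp add: algebra_simps)
  have "(1 - xi) * - inner E a \<le> (1 - xi) * (norm a ^ 2 / 2 + norm E ^ 2 / 2)"
    using inner_le_half_squares[of "- E" a] xi0 by (intro mult_left_mono) (auto simp: inner_commute)
  then have Ea: "- inner E a + xi * inner E a
      \<le> norm a ^ 2 / 2 - xi * norm a ^ 2 / 2 + norm E ^ 2 / 2 - xi * norm E ^ 2 / 2"
    by (simp add: field_simps)
  have "xi * - (t * inner E F) \<le> xi * (t ^ 2 * norm F ^ 2 / 2 + norm E ^ 2 / 2)"
    using inner_le_half_squares[of "- E" "t *\<^sub>R F"] xi0
    by (intro mult_left_mono) (auto simp: power_mult_distrib)
  then have EF: "- (xi * t * inner E F) \<le> xi * t ^ 2 * norm F ^ 2 / 2 + xi * norm E ^ 2 / 2"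
    by (simp add: field_simps)
  have FG: "xi * lam * t * inner F G
      \<le> norm a ^ 2 / 2 - xi * norm a ^ 2 / 2 + xi * t ^ 2 * norm F ^ 2 / 4"
    by (rule merit_coupling_term_bound[OF lam t xi G])
  have "xi * inner a b \<le> inner a b" using mono xi0 mult_right_mono[of xi 1 "inner a b"] by simp
  with Fa Fb FE Ea EF FG show ?thesis by linarith
qed

lemma merit_increment_algebraic_bound:
  fixes a b E F G :: "'a::real_inner"
  assumes lam: "lam > 0" and L: "L \<ge> 0" and t: "t > 0"
    and xi: "xi = 1 / (2 + 2 * lam ^ 2 * L ^ 2)" and M: "M = L / 2 + lam * L ^ 2 / 2 + 1 / lam"
    and step: "a + b = - (t *\<^sub>R F + E)" and mono: "inner a b \<ge> 0" and G: "norm G \<le> L * norm a"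
    and D: "D \<le> inner F a + inner b a / lam + L / 2 * norm a ^ 2"
  shows "D + xi * lam / 2 * (norm (F + G + (1 / lam) *\<^sub>R b) ^ 2 - norm F ^ 2)
         \<le> - (xi / 4 - 2 * t * M) * t * norm F ^ 2 + (1 / 2 + 2 * t * M) * norm E ^ 2 / t"
proof -
  have xi0: "0 \<le> xi" "xi \<le> 1 / 2" using merit_weight_bounds[of lam L] unfolding xi by auto
  have M0: "M \<ge> 0" using lam L unfolding M by simp
  define R where "R = norm (G + (1 / lam) *\<^sub>R b) ^ 2"
  have expand: "norm (F + G + (1 / lam) *\<^sub>R b) ^ 2 - norm F ^ 2
      = 2 * inner F G + 2 * (inner F b / lam) + R"
    using norm_add_square[of F "G + (1 / lam) *\<^sub>R b"] by (simp add: R_def inner_add_right add.assoc)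
  have remainder: "inner a b / lam + L / 2 * norm a ^ 2 + xi * lam / 2 * R \<le> M * norm (a + b) ^ 2"
    unfolding R_def M using merit_remainder_bound[OF lam L xi0 mono G] .
  have "norm (a + b) ^ 2 \<le> 2 * (t ^ 2 * norm F ^ 2) + 2 * norm E ^ 2"
    using norm_triangle_ineq[of "t *\<^sub>R F" E] square_sum_le[of "norm (t *\<^sub>R F)" "norm E"] t
    unfolding step norm_minus_cancel
    by (smt (verit) norm_ge_zero power_mono power_mult_distrib norm_scaleR abs_of_pos)
  then have "t * (M * norm (a + b) ^ 2) \<le> t * (M * (2 * (t ^ 2 * norm F ^ 2) + 2 * norm E ^ 2))"
    using t M0 by (intro mult_left_mono) auto
  then have rem: "t * (inner a b / lam + L / 2 * norm a ^ 2) + t * (xi * lam / 2 * R)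
      \<le> t * (M * (2 * (t ^ 2 * norm F ^ 2) + 2 * norm E ^ 2))"
    using mult_left_mono[OF remainder, of t] t by (simp add: distrib_left)
  have cross: "t * inner F a + xi * t * inner F b + xi * lam * t * inner F G
      \<le> norm E ^ 2 / 2 - xi * t ^ 2 * norm F ^ 2 / 4"
    using merit_cross_terms_bound[OF lam L _ xi step mono G] t by simp
  have "t * D \<le> t * (inner F a + (inner a b / lam + L / 2 * norm a ^ 2))"
    using D t by (simp add: inner_commute add.assoc)
  then have desc: "t * D \<le> t * inner F a + t * (inner a b / lam + L / 2 * norm a ^ 2)"
    by (simp add: distrib_left)
  have "t * (D + xi * lam / 2 * (2 * inner F G + 2 * (inner F b / lam) + R))
      = t * D + xi * t * inner F b + xi * lam * t * inner F G + t * (xi * lam / 2 * R)"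
    using lam by (simp add: field_simps)
  also have "\<dots> \<le> norm E ^ 2 / 2 - xi * t ^ 2 * norm F ^ 2 / 4
      + t * (M * (2 * (t ^ 2 * norm F ^ 2) + 2 * norm E ^ 2))"
    using rem cross desc by linarith
  also have "\<dots>
      = t * (- (xi / 4 - 2 * t * M) * t * norm F ^ 2 + (1 / 2 + 2 * t * M) * norm E ^ 2 / t)"
    using t by (simp add: field_simps power2_eq_square)
  finally have "t * (D + xi * lam / 2 * (2 * inner F G + 2 * (inner F b / lam) + R))
      \<le> t * (- (xi / 4 - 2 * t * M) * t * norm F ^ 2 + (1 / 2 + 2 * t * M) * norm E ^ 2 / t)" .
  then show ?thesis unfolding expand using t by simp
qed

lemma Fnor_lipschitz:
  fixes \<phi> :: "'a::euclidean_space \<Rightarrow> ereal"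
  assumes prox: "proper_fun \<phi>" "convex_fun \<phi>" "lsc_fun \<phi>" "lam > 0"
    and lipschitz: "L-lipschitz_on C (grad f)"
    and C: "prox lam \<phi> z1 \<in> C" "prox lam \<phi> z2 \<in> C"
  shows "norm (Fnor f lam \<phi> z1 - Fnor f lam \<phi> z2) \<le> (L + 1 / lam) * norm (z1 - z2)"
proof -
  define p1 p2 where "p1 = prox lam \<phi> z1" and "p2 = prox lam \<phi> z2"
  have L: "L \<ge> 0" using lipschitz by (rule lipschitz_on_nonneg)
  have "Fnor f lam \<phi> z1 - Fnor f lam \<phi> z2
      = (grad f p1 - grad f p2) + (1 / lam) *\<^sub>R ((z1 - p1) - (z2 - p2))"
    by (simp add: Fnor_def p1_def p2_def algebra_simps)
  then have "norm (Fnor f lam \<phi> z1 - Fnor f lam \<phi> z2)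
      \<le> norm (grad f p1 - grad f p2) + (1 / lam) * norm ((z1 - p1) - (z2 - p2))"
    using norm_triangle_ineq prox(4) by (metis norm_scaleR abs_of_pos zero_less_divide_1_iff)
  also have "\<dots> \<le> L * norm (z1 - z2) + (1 / lam) * norm (z1 - z2)"
  proof (rule add_mono)
    have "norm (grad f p1 - grad f p2) \<le> L * norm (p1 - p2)"
      using lipschitz_on_normD[OF lipschitz] C by (simp add: p1_def p2_def)
    also have "\<dots> \<le> L * norm (z1 - z2)"
      using prox_nonexpansive(1)[OF prox] L by (simp add: p1_def p2_def mult_left_mono)
    finally show "norm (grad f p1 - grad f p2) \<le> L * norm (z1 - z2)" .
    show "(1 / lam) * norm ((z1 - p1) - (z2 - p2)) \<le> (1 / lam) * norm (z1 - z2)"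
      using prox_nonexpansive(2)[OF prox, of z1 z2] prox(4)
      by (simp add: p1_def p2_def divide_right_mono)
  qed
  finally show ?thesis by (simp add: distrib_right)
qed

lemma composite_descent_inequality:
  fixes \<phi> :: "'a::euclidean_space \<Rightarrow> ereal"
  assumes prox: "proper_fun \<phi>" "convex_fun \<phi>" "lsc_fun \<phi>" "lam > 0"
    and C: "convex C" "prox lam \<phi> z1 \<in> C" "prox lam \<phi> z2 \<in> C"
    and deriv: "\<And>u. u \<in> C \<Longrightarrow> (f has_derivative (\<lambda>h. grad f u \<bullet> h)) (at u)"
    and lipschitz: "L-lipschitz_on C (grad f)"
    and v1: "\<phi> (prox lam \<phi> z1) = ereal v1" and v2: "\<phi> (prox lam \<phi> z2) = ereal v2"
  defines "a \<equiv> prox lam \<phi> z2 - prox lam \<phi> z1"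
    and "b \<equiv> (z2 - prox lam \<phi> z2) - (z1 - prox lam \<phi> z1)"
  shows "(f (prox lam \<phi> z2) + v2) - (f (prox lam \<phi> z1) + v1)
         \<le> inner (Fnor f lam \<phi> z1) a + inner b a / lam + L / 2 * norm a ^ 2"
proof -
  define p1 p2 where "p1 = prox lam \<phi> z1" and "p2 = prox lam \<phi> z2"
  have "f p2 \<le> f p1 + grad f p1 \<bullet> a + L / 2 * norm a ^ 2"
    unfolding a_def p1_def p2_def using descent_lemma[OF C deriv lipschitz] .
  moreover have "v2 + inner (z2 - p2) (p1 - p2) / lam \<le> v1"
    using prox_variational_inequality[OF prox, of z2 p1] v1 v2 by (simp add: p1_def p2_def)
  moreover have "inner (Fnor f lam \<phi> z1) a = grad f p1 \<bullet> a + inner (z1 - p1) a / lam"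
    by (simp add: Fnor_def p1_def inner_add_left)
  moreover have "inner b a = inner (z2 - p2) a - inner (z1 - p1) a"
    by (simp add: b_def p1_def p2_def inner_diff_left)
  moreover have "inner (z2 - p2) (p1 - p2) = - inner (z2 - p2) a"
    by (metis a_def p1_def p2_def inner_minus_right minus_diff_eq)
  ultimately show ?thesis unfolding p1_def p2_def by (simp add: diff_divide_distrib)
qed

lemma Hmerit_increment_bound:
  fixes \<phi> :: "'a::euclidean_space \<Rightarrow> ereal"
  assumes prox: "proper_fun \<phi>" "convex_fun \<phi>" "lsc_fun \<phi>" "lam > 0"
    and C: "convex C" "prox lam \<phi> z1 \<in> C" "prox lam \<phi> z2 \<in> C"
    and deriv: "\<And>u. u \<in> C \<Longrightarrow> (f has_derivative (\<lambda>h. grad f u \<bullet> h)) (at u)"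
    and lipschitz: "L-lipschitz_on C (grad f)"
    and t: "t > 0" and xi: "xi = 1 / (2 + 2 * lam ^ 2 * L ^ 2)"
    and M: "M = L / 2 + lam * L ^ 2 / 2 + 1 / lam"
  shows "Hmerit f lam \<phi> xi z2 - Hmerit f lam \<phi> xi z1
         \<le> ereal (- (xi / 4 - 2 * t * M) * t * norm (Fnor f lam \<phi> z1) ^ 2
                  + (1 / 2 + 2 * t * M) * norm (z2 - z1 + t *\<^sub>R Fnor f lam \<phi> z1) ^ 2 / t)"
proof -
  define p1 p2 where "p1 = prox lam \<phi> z1" and "p2 = prox lam \<phi> z2"
  define F where "F = Fnor f lam \<phi> z1"
  define a b where "a = p2 - p1" and "b = (z2 - p2) - (z1 - p1)"
  obtain v1 where v1: "\<phi> p1 = ereal v1" using prox_finite[OF prox] p1_def by metis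
  obtain v2 where v2: "\<phi> p2 = ereal v2" using prox_finite[OF prox] p2_def by metis
  define D where "D = (f p2 + v2) - (f p1 + v1)"
  have L: "L \<ge> 0" using lipschitz by (rule lipschitz_on_nonneg)
  have step: "a + b = - (t *\<^sub>R F + - (z2 - z1 + t *\<^sub>R F))" by (simp add: a_def b_def)
  have mono: "inner a b \<ge> 0"
    using prox_firmly_nonexpansive[OF prox, of z2 z1] by (simp add: a_def b_def p1_def p2_def)
  have G: "norm (grad f p2 - grad f p1) \<le> L * norm a"
    using lipschitz_on_normD[OF lipschitz] C by (simp add: a_def p1_def p2_def)
  have D: "D \<le> inner F a + inner b a / lam + L / 2 * norm a ^ 2"
    using composite_descent_inequality[OF prox C deriv lipschitz v1[unfolded p1_def]
        v2[unfolded p2_def]]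
    by (simp add: D_def F_def a_def b_def p1_def p2_def)
  have "D + xi * lam / 2 * (norm (F + (grad f p2 - grad f p1) + (1 / lam) *\<^sub>R b) ^ 2 - norm F ^ 2)
      \<le> - (xi / 4 - 2 * t * M) * t * norm F ^ 2
         + (1 / 2 + 2 * t * M) * norm (z2 - z1 + t *\<^sub>R F) ^ 2 / t"
    using merit_increment_algebraic_bound[OF prox(4) L t xi M step mono G D]
    unfolding norm_minus_cancel .
  moreover have "F + (grad f p2 - grad f p1) + (1 / lam) *\<^sub>R b = Fnor f lam \<phi> z2"
    by (simp add: F_def Fnor_def b_def p1_def p2_def algebra_simps)
  moreover have "Hmerit f lam \<phi> xi z2 - Hmerit f lam \<phi> xi z1
      = ereal (D + xi * lam / 2 * (norm (Fnor f lam \<phi> z2) ^ 2 - norm F ^ 2))"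
    by (simp add: Hmerit_def D_def F_def v1 v2 p1_def[symmetric] p2_def[symmetric] algebra_simps)
  ultimately show ?thesis by (simp add: F_def)
qed

section \<open>Time windows\<close>

lemma tau_unbounded:
  assumes pos: "\<And>i. \<alpha> i > 0" and divergent: "\<not> summable \<alpha>"
  obtains N where "T < tau \<alpha> m N"
proof -
  have "\<exists>N. T < tau \<alpha> m N"
  proof (rule ccontr)
    assume "\<not> (\<exists>N. T < tau \<alpha> m N)"
    then have bound: "tau \<alpha> m N \<le> T" for N by (simp add: not_less)
    have "(\<Sum>i<n. \<alpha> i) \<le> (\<Sum>i<m. \<alpha> i) + T" for n
    proof (cases "m \<le> n")
      case True
      then have "(\<Sum>i<n. \<alpha> i) = (\<Sum>i<m. \<alpha> i) + tau \<alpha> m n"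
        by (simp add: tau_def atLeast0LessThan[symmetric] sum.atLeastLessThan_concat)
      then show ?thesis using bound[of n] by simp
    next
      case False
      then have "(\<Sum>i<n. \<alpha> i) \<le> (\<Sum>i<m. \<alpha> i)"
        using pos by (intro sum_mono2) (auto intro: less_imp_le)
      moreover have "T \<ge> 0" using bound[of m] by (simp add: tau_def)
      ultimately show ?thesis by simp
    qed
    then have "summable \<alpha>" using pos by (intro summableI_nonneg_bounded) (auto intro: less_imp_le)
    with divergent show False by simp
  qed
  then show ?thesis using that by blast
qed

lemma tau_mono:
  assumes "\<And>i. \<alpha> i > 0" "n \<le> p"
  shows "tau \<alpha> m n \<le> tau \<alpha> m p"
  unfolding tau_def using assms by (intro sum_mono2) (auto intro: less_imp_le)

text \<open>The Sup in varpi is a finite Max because tau m is unbounded.\<close>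
lemma varpi_window:
  assumes pos: "\<And>i. \<alpha> i > 0" and divergent: "\<not> summable \<alpha>" and first: "\<alpha> m \<le> T"
  shows "m < varpi \<alpha> m T" "tau \<alpha> m (varpi \<alpha> m T) \<le> T" "T < tau \<alpha> m (Suc (varpi \<alpha> m T))"
proof -
  define S where "S = {n. m \<le> n \<and> tau \<alpha> m n \<le> T}"
  obtain N where N: "T < tau \<alpha> m N" using tau_unbounded[OF pos divergent] .
  have "S \<subseteq> {..<N}"
  proof
    fix n assume "n \<in> S"
    show "n \<in> {..<N}"
    proof (rule ccontr)
      assume "n \<notin> {..<N}"
      then have "tau \<alpha> m N \<le> tau \<alpha> m n" using tau_mono[OF pos] by simp
      with N \<open>n \<in> S\<close> show False by (simp add: S_def)
    qed
  qed
  then have fin: "finite S" by (rule finite_subset) simp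
  have Suc_m: "Suc m \<in> S" using first by (simp add: S_def tau_def)
  then have "S \<noteq> {}" by blast
  then have n: "varpi \<alpha> m T = Max S" "Max S \<in> S" "Suc m \<le> Max S"
    using fin Suc_m Max_ge[OF fin Suc_m] by (simp_all add: varpi_def S_def[symmetric] cSup_eq_Max)
  show "m < varpi \<alpha> m T" "tau \<alpha> m (varpi \<alpha> m T) \<le> T" using n by (simp_all add: S_def)
  have "Suc (Max S) \<notin> S" using Max_ge[OF fin, of "Suc (Max S)"] by auto
  then show "T < tau \<alpha> m (Suc (varpi \<alpha> m T))" using n by (simp add: S_def not_le)
qed

lemma tidx_ge: "k \<le> tidx \<alpha> T k"
  by (induction k) (auto simp: varpi_def)

lemma sagg_ge:
  assumes "tidx \<alpha> T k < j" "j \<le> tidx \<alpha> T (Suc k)"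
  shows "norm (\<Sum>i\<in>{tidx \<alpha> T k..<j}. \<alpha> i *\<^sub>R e i) \<le> sagg \<alpha> T e k"
  unfolding sagg_def using assms by (intro Max_ge) auto

lemma window_deviation_le:
  fixes z F e :: "nat \<Rightarrow> 'a::real_normed_vector"
  assumes rec: "\<And>i. z (Suc i) = z i - \<alpha> i *\<^sub>R (F i + e i)" and pos: "\<And>i. \<alpha> i > 0"
    and lip: "\<And>i j. norm (F i - F j) \<le> K * norm (z i - z j)"
    and "m \<le> j" and err: "norm (\<Sum>i\<in>{m..<j}. \<alpha> i *\<^sub>R e i) \<le> s"
  shows "norm (z j - z m + (\<Sum>i\<in>{m..<j}. \<alpha> i) *\<^sub>R F m)
         \<le> (\<Sum>i\<in>{m..<j}. \<alpha> i * (K * norm (z i - z m))) + s"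
proof -
  have "z j - z m = - (\<Sum>i\<in>{m..<j}. \<alpha> i *\<^sub>R (F i + e i))"
    using sum_Suc_diff'[OF \<open>m \<le> j\<close>, of z] by (simp add: rec sum_negf)
  moreover have "(\<Sum>i\<in>{m..<j}. \<alpha> i *\<^sub>R (F i + e i)) = (\<Sum>i\<in>{m..<j}. \<alpha> i *\<^sub>R (F i - F m))
      + (\<Sum>i\<in>{m..<j}. \<alpha> i *\<^sub>R e i) + (\<Sum>i\<in>{m..<j}. \<alpha> i) *\<^sub>R F m"
    by (simp add: scaleR_sum_left sum.distrib[symmetric] algebra_simps)
  ultimately have "z j - z m + (\<Sum>i\<in>{m..<j}. \<alpha> i) *\<^sub>R F m
      = - (\<Sum>i\<in>{m..<j}. \<alpha> i *\<^sub>R (F i - F m)) - (\<Sum>i\<in>{m..<j}. \<alpha> i *\<^sub>R e i)"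
    by (simp add: algebra_simps)
  then have "norm (z j - z m + (\<Sum>i\<in>{m..<j}. \<alpha> i) *\<^sub>R F m)
      \<le> (\<Sum>i\<in>{m..<j}. norm (\<alpha> i *\<^sub>R (F i - F m))) + s"
    using norm_triangle_ineq4[of "- (\<Sum>i\<in>{m..<j}. \<alpha> i *\<^sub>R (F i - F m))"
        "\<Sum>i\<in>{m..<j}. \<alpha> i *\<^sub>R e i"]
      norm_sum[of "\<lambda>i. \<alpha> i *\<^sub>R (F i - F m)" "{m..<j}"] err
    by (simp only: norm_minus_cancel)
  also have "(\<Sum>i\<in>{m..<j}. norm (\<alpha> i *\<^sub>R (F i - F m))) \<le> (\<Sum>i\<in>{m..<j}. \<alpha> i * (K * norm (z i - z m)))"
    using lip pos by (intro sum_mono) (simp add: less_imp_le mult_left_mono)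
  finally show ?thesis by simp
qed

text \<open>The iterates of the window stay within 2 (T |F m| + s) of z m (strong induction on
  the index), which bounds the drift of F along the window.\<close>
lemma window_deviation_bound:
  fixes z F e :: "nat \<Rightarrow> 'a::real_normed_vector"
  assumes rec: "\<And>i. z (Suc i) = z i - \<alpha> i *\<^sub>R (F i + e i)" and pos: "\<And>i. \<alpha> i > 0"
    and lip: "\<And>i j. norm (F i - F j) \<le> K * norm (z i - z j)"
    and K: "K \<ge> 0" "K * T \<le> 1 / 2" and "m < n" and window: "tau \<alpha> m n \<le> T"
    and err: "\<And>j. m < j \<Longrightarrow> j \<le> n \<Longrightarrow> norm (\<Sum>i\<in>{m..<j}. \<alpha> i *\<^sub>R e i) \<le> s"
  shows "norm (z n - z m + tau \<alpha> m n *\<^sub>R F m) \<le> s + 2 * K * T * (T * norm (F m) + s)"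
proof -
  have s: "s \<ge> 0" using err[OF \<open>m < n\<close> order_refl] norm_ge_zero order_trans by blast
  define A where "A = T * norm (F m) + s"
  have tau: "tau \<alpha> m j \<le> T" if "j \<le> n" for j
    using tau_mono[where \<alpha>=\<alpha> and m=m, OF pos that] window by simp
  have "T \<ge> 0" using tau[of m] \<open>m < n\<close> by (simp add: tau_def)
  then have A: "A \<ge> 0" "K * (2 * A) * T \<le> A"
    using s K mult_left_mono[OF K(2), of "2 * A"] by (auto simp: A_def algebra_simps)
  have step: "norm (z j - z m + tau \<alpha> m j *\<^sub>R F m) \<le> s + K * (2 * A) * T"
    if "m \<le> j" "j \<le> n" and close: "\<And>i. m \<le> i \<Longrightarrow> i < j \<Longrightarrow> norm (z i - z m) \<le> 2 * A" for j
  proof -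
    have "(\<Sum>i\<in>{m..<j}. \<alpha> i * (K * norm (z i - z m))) \<le> (\<Sum>i\<in>{m..<j}. \<alpha> i * (K * (2 * A)))"
      using close pos K by (intro sum_mono mult_left_mono) (auto intro: less_imp_le)
    also have "\<dots> = K * (2 * A) * tau \<alpha> m j" by (simp add: tau_def sum_distrib_right mult.commute)
    also have "\<dots> \<le> K * (2 * A) * T" using tau[OF \<open>j \<le> n\<close>] K A by (simp add: mult_left_mono)
    finally have "(\<Sum>i\<in>{m..<j}. \<alpha> i * (K * norm (z i - z m))) \<le> K * (2 * A) * T" .
    moreover have "norm (\<Sum>i\<in>{m..<j}. \<alpha> i *\<^sub>R e i) \<le> s"
      using err[of j] s that by (cases "m = j") auto
    ultimately show ?thesis
      using window_deviation_le[where z=z and \<alpha>=\<alpha> and F=F and e=e and K=K, OF rec pos lip \<open>m \<le> j\<close>]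
      by (fastforce simp: tau_def)
  qed
  have close: "norm (z j - z m) \<le> 2 * A" if "m \<le> j" "j \<le> n" for j
    using that
  proof (induction j rule: less_induct)
    case (less j)
    have "norm (tau \<alpha> m j *\<^sub>R F m) \<le> T * norm (F m)"
      using tau[OF less.prems(2)] pos by (simp add: tau_def sum_nonneg less_imp_le mult_right_mono)
    moreover have "norm (z j - z m)
        \<le> norm (z j - z m + tau \<alpha> m j *\<^sub>R F m) + norm (tau \<alpha> m j *\<^sub>R F m)"
      by (metis add_diff_cancel norm_triangle_ineq4)
    moreover have "norm (z j - z m + tau \<alpha> m j *\<^sub>R F m) \<le> s + K * (2 * A) * T"
      using less.IH less.prems by (intro step) auto
    ultimately show ?case using A A_def by linarith
  qed
  have "norm (z n - z m + tau \<alpha> m n *\<^sub>R F m) \<le> s + K * (2 * A) * T"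
    using close \<open>m < n\<close> by (intro step) auto
  then show ?thesis by (simp add: A_def algebra_simps)
qed

section \<open>Descent of the merit function over time windows\<close>

text \<open>With t M \<le> xi/80 and t \<ge> 19T/20 the descent coefficient is at least (171/800) xi T,
  which leaves room for the error terms; the margins 1/40 and 1/80 are chosen for this.\<close>
lemma window_merit_arith:
  fixes xi T t K M s nF nE D :: real
  assumes xi: "0 < xi" "xi \<le> 1 / 2" and T: "T > 0" and t: "19 * T / 20 \<le> t" "t \<le> T"
    and K: "K \<ge> 0" "K * T \<le> xi / 40" and M: "M \<ge> 0" "T * M \<le> xi / 80"
    and s: "s \<ge> 0" and nF: "nF \<ge> 0" and nE: "nE \<ge> 0" "nE \<le> s + 2 * K * T * (T * nF + s)"
    and D: "D \<le> - (xi / 4 - 2 * t * M) * t * nF ^ 2 + (1 / 2 + 2 * t * M) * nE ^ 2 / t"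
  shows "D \<le> - (xi * T / 5) * nF ^ 2 + 5 / T * s ^ 2"
proof -
  have t0: "t > 0" using t T by linarith
  have tM: "t * M \<le> xi / 80" using M t by (meson mult_right_mono order_trans)
  have "(9 * xi / 40) * (19 * T / 20) * nF ^ 2 \<le> (xi / 4 - 2 * t * M) * t * nF ^ 2"
    using tM t xi T by (intro mult_right_mono mult_mono) auto
  moreover have "(9 * xi / 40) * (19 * T / 20) * nF ^ 2 = 171 / 800 * (xi * T * nF ^ 2)" by simp
  ultimately have first: "- (xi / 4 - 2 * t * M) * t * nF ^ 2 \<le> - (171 / 800 * (xi * T * nF ^ 2))"
    by (simp only: mult_minus_left)
  have "2 * K * T * (T * nF + s) \<le> xi / 20 * (T * nF + s)"
    using K T nF s by (intro mult_right_mono) auto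
  moreover have "xi / 20 * (T * nF + s) = xi / 20 * (T * nF) + xi / 20 * s"
    by (simp add: distrib_left)
  moreover have "xi / 20 * s \<le> s" using xi s mult_right_mono[of "xi / 20" 1 s] by simp
  ultimately have "nE \<le> 2 * s + xi / 20 * (T * nF)" using nE(2) by linarith
  then have "nE ^ 2 \<le> (2 * s + xi / 20 * (T * nF)) ^ 2" using nE(1) by (rule power_mono)
  also have "\<dots> \<le> 2 * (2 * s) ^ 2 + 2 * (xi / 20 * (T * nF)) ^ 2" by (rule square_sum_le)
  also have "\<dots> \<le> 8 * s ^ 2 + xi / 400 * (T ^ 2 * nF ^ 2)"
  proof -
    have "2 * (xi / 20 * (T * nF)) ^ 2 = xi * xi / 200 * (T ^ 2 * nF ^ 2)"
      by (simp add: power_mult_distrib power2_eq_square)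
    also have "\<dots> \<le> xi * (1 / 2) / 200 * (T ^ 2 * nF ^ 2)"
      using xi by (intro mult_right_mono divide_right_mono mult_left_mono) auto
    finally show ?thesis by simp
  qed
  finally have nE2: "nE ^ 2 \<le> 8 * s ^ 2 + xi / 400 * (T ^ 2 * nF ^ 2)" .
  have "(1 / 2 + 2 * t * M) * nE ^ 2 / t \<le> 41 / 80 * (8 * s ^ 2 + xi / 400 * (T ^ 2 * nF ^ 2)) / t"
    using tM xi t0 M nE2 by (intro divide_right_mono mult_mono) auto
  also have "\<dots> \<le> 41 / 80 * (8 * s ^ 2 + xi / 400 * (T ^ 2 * nF ^ 2)) / (19 * T / 20)"
    using t T xi by (intro divide_left_mono) auto
  also have "\<dots> = 164 / 38 * (s ^ 2 / T) + 41 / 30400 * (xi * T * nF ^ 2)"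
    using T by (simp add: field_simps power2_eq_square)
  finally have second: "(1 / 2 + 2 * t * M) * nE ^ 2 / t
      \<le> 164 / 38 * (s ^ 2 / T) + 41 / 30400 * (xi * T * nF ^ 2)" .
  have "0 \<le> xi * T * nF ^ 2" "0 \<le> s ^ 2 / T" using xi T by simp_all
  moreover have "- (xi * T / 5) * nF ^ 2 + 5 / T * s ^ 2
      = - (1 / 5 * (xi * T * nF ^ 2)) + 5 * (s ^ 2 / T)"
    by simp
  ultimately show ?thesis using D first second by linarith
qed

lemma merit_descent_on_window:
  fixes \<phi> :: "'a::euclidean_space \<Rightarrow> ereal" and z e :: "nat \<Rightarrow> 'a"
  assumes prox: "proper_fun \<phi>" "convex_fun \<phi>" "lsc_fun \<phi>" "lam > 0"
    and pos: "\<And>i. \<alpha> i > 0"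
    and rec: "\<And>i. z (Suc i) = z i - \<alpha> i *\<^sub>R (Fnor f lam \<phi> (z i) + e i)"
    and C: "convex C" "\<And>i. prox lam \<phi> (z i) \<in> C"
    and deriv: "\<And>u. u \<in> C \<Longrightarrow> (f has_derivative (\<lambda>h. grad f u \<bullet> h)) (at u)"
    and lipschitz: "L-lipschitz_on C (grad f)" and xi: "xi = 1 / (2 + 2 * lam ^ 2 * L ^ 2)"
    and T: "T > 0" "(L + 1 / lam) * T \<le> xi / 40" "T * (L / 2 + lam * L ^ 2 / 2 + 1 / lam) \<le> xi / 80"
    and window: "m < n" "19 * T / 20 \<le> tau \<alpha> m n" "tau \<alpha> m n \<le> T"
    and err: "\<And>j. m < j \<Longrightarrow> j \<le> n \<Longrightarrow> norm (\<Sum>i\<in>{m..<j}. \<alpha> i *\<^sub>R e i) \<le> s"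
  shows "Hmerit f lam \<phi> xi (z n) - Hmerit f lam \<phi> xi (z m)
         \<le> ereal (- (xi * T / 5) * norm (Fnor f lam \<phi> (z m)) ^ 2 + 5 / T * s ^ 2)"
proof -
  define F where "F i = Fnor f lam \<phi> (z i)" for i
  define t where "t = tau \<alpha> m n"
  have L: "L \<ge> 0" using lipschitz by (rule lipschitz_on_nonneg)
  have xi0: "0 < xi" "xi \<le> 1 / 2" unfolding xi by (rule merit_weight_bounds)+
  have K: "L + 1 / lam \<ge> 0" "(L + 1 / lam) * T \<le> 1 / 2" using L prox(4) T(2) xi0 by auto
  have s: "s \<ge> 0" using err[OF window(1) order_refl] norm_ge_zero order_trans by blast
  have dev: "norm (z n - z m + t *\<^sub>R F m) \<le> s + 2 * (L + 1 / lam) * T * (T * norm (F m) + s)"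
    unfolding t_def
    by (rule window_deviation_bound[OF rec[folded F_def] pos _ K window(1,3) err])
       (use Fnor_lipschitz[OF prox lipschitz C(2) C(2)] in \<open>simp add: F_def\<close>)
  define M where "M = L / 2 + lam * L ^ 2 / 2 + 1 / lam"
  have "Hmerit f lam \<phi> xi (z n) - Hmerit f lam \<phi> xi (z m)
      \<le> ereal (- (xi / 4 - 2 * t * M) * t * norm (F m) ^ 2
               + (1 / 2 + 2 * t * M) * norm (z n - z m + t *\<^sub>R F m) ^ 2 / t)"
    using Hmerit_increment_bound[OF prox C(1,2,2) deriv lipschitz _ xi M_def, of t] window T
    by (simp add: F_def t_def)
  also have "\<dots> \<le> ereal (- (xi * T / 5) * norm (F m) ^ 2 + 5 / T * s ^ 2)"
    using window_merit_arith[OF xi0 T(1) window(2,3)[folded t_def] K(1) T(2) _ T(3)[folded M_def] s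
        norm_ge_zero norm_ge_zero dev order_refl] L prox(4) by (simp add: M_def)
  finally show ?thesis by (simp add: F_def)
qed

lemma merit_descent_on_time_windows:
  fixes \<phi> :: "'a::euclidean_space \<Rightarrow> ereal" and z e :: "nat \<Rightarrow> 'a"
  assumes prox: "proper_fun \<phi>" "convex_fun \<phi>" "lsc_fun \<phi>" "lam > 0"
    and pos: "\<And>i. \<alpha> i > 0" and divergent: "\<not> summable \<alpha>" and vanishing: "\<alpha> \<longlonglongrightarrow> 0"
    and rec: "\<And>i. z (Suc i) = z i - \<alpha> i *\<^sub>R (Fnor f lam \<phi> (z i) + e i)"
    and C: "convex C" "\<And>i. prox lam \<phi> (z i) \<in> C"
    and deriv: "\<And>u. u \<in> C \<Longrightarrow> (f has_derivative (\<lambda>h. grad f u \<bullet> h)) (at u)"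
    and lipschitz: "L-lipschitz_on C (grad f)" and xi: "xi = 1 / (2 + 2 * lam ^ 2 * L ^ 2)"
  shows "\<exists>Tbar>0. \<forall>T. 0 < T \<and> T \<le> Tbar \<longrightarrow> (\<exists>K0. \<forall>k\<ge>K0.
           Hmerit f lam \<phi> xi (z (tidx \<alpha> T (Suc k))) - Hmerit f lam \<phi> xi (z (tidx \<alpha> T k))
           \<le> ereal (- (xi * T / 5) * norm (Fnor f lam \<phi> (z (tidx \<alpha> T k))) ^ 2
                    + 5 / T * (sagg \<alpha> T e k) ^ 2))"
proof -
  define K M where "K = L + 1 / lam" and "M = L / 2 + lam * L ^ 2 / 2 + 1 / lam"
  have L: "L \<ge> 0" using lipschitz by (rule lipschitz_on_nonneg)
  have xi0: "xi > 0" unfolding xi by (rule merit_weight_bounds)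
  have KM: "K > 0" "M > 0" using L prox(4) by (simp_all add: K_def M_def add_nonneg_pos)
  have "0 < T \<and> T \<le> min (xi / (40 * K)) (xi / (80 * M)) \<longrightarrow> (\<exists>K0. \<forall>k\<ge>K0.
           Hmerit f lam \<phi> xi (z (tidx \<alpha> T (Suc k))) - Hmerit f lam \<phi> xi (z (tidx \<alpha> T k))
           \<le> ereal (- (xi * T / 5) * norm (Fnor f lam \<phi> (z (tidx \<alpha> T k))) ^ 2
                    + 5 / T * (sagg \<alpha> T e k) ^ 2))" for T
  proof (intro impI)
    assume T: "0 < T \<and> T \<le> min (xi / (40 * K)) (xi / (80 * M))"
    then have KT: "K * T \<le> xi / 40" "T * M \<le> xi / 80" using KM by (simp_all add: field_simps)
    obtain N0 where N0: "\<And>i. i \<ge> N0 \<Longrightarrow> \<alpha> i < T / 20"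
      using order_tendstoD(2)[OF vanishing, of "T / 20"] T unfolding eventually_sequentially by auto
    show "\<exists>K0. \<forall>k\<ge>K0. Hmerit f lam \<phi> xi (z (tidx \<alpha> T (Suc k))) - Hmerit f lam \<phi> xi (z (tidx \<alpha> T k))
           \<le> ereal (- (xi * T / 5) * norm (Fnor f lam \<phi> (z (tidx \<alpha> T k))) ^ 2
                    + 5 / T * (sagg \<alpha> T e k) ^ 2)"
    proof (intro exI[of _ N0] allI impI)
      fix k assume "N0 \<le> k"
      define m n where "m = tidx \<alpha> T k" and "n = tidx \<alpha> T (Suc k)"
      have "N0 \<le> m" using tidx_ge[of k \<alpha> T] \<open>N0 \<le> k\<close> by (simp add: m_def)
      then have "\<alpha> m \<le> T" using N0 T by force
      from varpi_window[OF pos divergent this]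
      have window: "m < n" "tau \<alpha> m n \<le> T" "T < tau \<alpha> m n + \<alpha> n"
        by (simp_all add: m_def n_def tau_def)
      moreover have "\<alpha> n < T / 20" using N0 \<open>N0 \<le> m\<close> window(1) by simp
      ultimately have "19 * T / 20 \<le> tau \<alpha> m n" by linarith
      with window show "Hmerit f lam \<phi> xi (z n) - Hmerit f lam \<phi> xi (z m)
           \<le> ereal (- (xi * T / 5) * norm (Fnor f lam \<phi> (z m)) ^ 2 + 5 / T * (sagg \<alpha> T e k) ^ 2)"
        using merit_descent_on_window[where \<alpha>=\<alpha> and z=z and e=e and T=T and m=m and n=n
            and s="sagg \<alpha> T e k", OF prox pos rec C deriv lipschitz xi]
          sagg_ge[of \<alpha> T k _ e] T KT by (simp add: K_def M_def m_def n_def mult.commute)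
    qed
  qed
  moreover have "min (xi / (40 * K)) (xi / (80 * M)) > 0" using xi0 KM by simp
  ultimately show ?thesis by blast
qed

theorem lemma2p11:
  fixes M :: "'w measure" and Fil :: "nat \<Rightarrow> 'w measure"
    and \<phi> :: "'a::euclidean_space \<Rightarrow> ereal" and f :: "'a \<Rightarrow> real"
    and lam :: real and \<alpha> :: "nat \<Rightarrow> real" and z0 :: 'a
    and g z x :: "nat \<Rightarrow> 'w \<Rightarrow> 'a"
    and \<sigma> \<beta> :: "nat \<Rightarrow> real"
    and L :: "'w \<Rightarrow> ereal" and \<xi> :: "'w \<Rightarrow> real"
  assumes phi_proper: "proper_fun \<phi>" and phi_convex: "convex_fun \<phi>" and phi_lsc: "lsc_fun \<phi>"
    and f_C1: "\<exists>U. open U \<and> edom \<phi> \<subseteq> U \<and>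
                  (\<forall>u\<in>U. (f has_derivative (\<lambda>h. grad f u \<bullet> h)) (at u)) \<and>
                  continuous_on U (grad f)"
    and M_prob: "prob_space M"
    and filt: "filtration (space M) Fil"
    and filt_sub: "\<And>k. sets (Fil k) \<subseteq> sets M"
    and lam_pos: "lam > 0"
    and alpha_pos: "\<And>k. \<alpha> k > 0"
    and g_meas: "\<And>k. g k \<in> borel_measurable (Fil (Suc k))"
    and z_init: "\<And>\<omega>. z 0 \<omega> = z0"
    and z_step: "\<And>k \<omega>. z (Suc k) \<omega> = z k \<omega> - \<alpha> k *\<^sub>R (g k \<omega> + grad_env lam \<phi> (z k \<omega>))"
    and x_def: "\<And>k \<omega>. x k \<omega> = prox lam \<phi> (z k \<omega>)"
    and L_def: "\<And>\<omega>. L \<omega> = (SUP xb\<in>closure (convex hull (range (\<lambda>k. x k \<omega>))). lip (grad f) xb)"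
    and xi_def: "\<And>\<omega>. \<xi> \<omega> = (if L \<omega> < \<infinity>
                         then 1 / (2 + 2 * lam ^ 2 * (real_of_ereal (L \<omega>)) ^ 2) else 0)"
    and A3: "\<not> summable \<alpha>" "\<alpha> \<longlonglongrightarrow> 0"
    and A4_var: "\<And>k. (\<integral>\<^sup>+ \<omega>. ennreal (norm (g k \<omega> - grad f (x k \<omega>)) ^ 2) \<partial>M) \<le> ennreal (\<sigma> k ^ 2)"
    and A4_sigma: "\<And>k. \<sigma> k \<ge> 0"
    and A4_beta_pos: "\<And>k. \<beta> k > 0"
    and A4_beta_mono: "\<exists>K. \<forall>k\<ge>K. \<beta> k \<le> \<beta> (Suc k)"
    and A4_sum: "summable (\<lambda>k. \<alpha> k ^ 2 * \<beta> k ^ 2 * \<sigma> k ^ 2)"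
  shows "\<forall>\<omega>\<in>space M. L \<omega> < \<infinity> \<longrightarrow>
           (\<exists>Tbar>0. \<forall>T. 0 < T \<and> T \<le> Tbar \<longrightarrow>
              (\<exists>K0. \<forall>k\<ge>K0.
                 Hmerit f lam \<phi> (\<xi> \<omega>) (z (tidx \<alpha> T (Suc k)) \<omega>)
                 - Hmerit f lam \<phi> (\<xi> \<omega>) (z (tidx \<alpha> T k) \<omega>)
                 \<le> ereal (- (\<xi> \<omega> * T / 5) * norm (Fnor f lam \<phi> (z (tidx \<alpha> T k) \<omega>)) ^ 2
                          + 5 / T * (sagg \<alpha> T (\<lambda>i. g i \<omega> - grad f (x i \<omega>)) k) ^ 2)))"
proof (intro ballI impI)
  fix \<omega> assume "\<omega> \<in> space M" and finite: "L \<omega> < \<infinity>"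
  obtain U where U: "edom \<phi> \<subseteq> U" "\<forall>u\<in>U. (f has_derivative (\<lambda>h. grad f u \<bullet> h)) (at u)"
    using f_C1 by blast
  define C where "C = convex hull (range (\<lambda>k. prox lam \<phi> (z k \<omega>)))"
  define Lr where "Lr = \<bar>real_of_ereal (L \<omega>)\<bar>"
  have "range (\<lambda>k. x k \<omega>) = range (\<lambda>k. prox lam \<phi> (z k \<omega>))" by (simp add: x_def)
  then have lipschitz: "Lr-lipschitz_on C (grad f)"
    using lipschitz_on_convex_hull_if_SUP_lip_finite finite by (simp add: L_def Lr_def C_def)
  have deriv: "(f has_derivative (\<lambda>h. grad f u \<bullet> h)) (at u)" if "u \<in> C" for u
    using convex_hull_prox_subset_edom[OF phi_proper phi_convex phi_lsc lam_pos, of "\<lambda>k. z k \<omega>"]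
      U that
    by (auto simp: C_def)
  have rec: "z (Suc k) \<omega> = z k \<omega> - \<alpha> k *\<^sub>R (Fnor f lam \<phi> (z k \<omega>) + (g k \<omega> - grad f (x k \<omega>)))" for k
    by (simp add: z_step grad_env_def Fnor_def x_def algebra_simps)
  have xi: "\<xi> \<omega> = 1 / (2 + 2 * lam ^ 2 * Lr ^ 2)"
    using xi_def[of \<omega>] finite power2_abs[of "real_of_ereal (L \<omega>)"] by (simp add: Lr_def)
  show "\<exists>Tbar>0. \<forall>T. 0 < T \<and> T \<le> Tbar \<longrightarrow> (\<exists>K0. \<forall>k\<ge>K0.
                 Hmerit f lam \<phi> (\<xi> \<omega>) (z (tidx \<alpha> T (Suc k)) \<omega>)
                 - Hmerit f lam \<phi> (\<xi> \<omega>) (z (tidx \<alpha> T k) \<omega>)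
                 \<le> ereal (- (\<xi> \<omega> * T / 5) * norm (Fnor f lam \<phi> (z (tidx \<alpha> T k) \<omega>)) ^ 2
                          + 5 / T * (sagg \<alpha> T (\<lambda>i. g i \<omega> - grad f (x i \<omega>)) k) ^ 2))"
    by (rule merit_descent_on_time_windows[where z="\<lambda>i. z i \<omega>" and e="\<lambda>i. g i \<omega> - grad f (x i \<omega>)",
          OF phi_proper phi_convex phi_lsc lam_pos alpha_pos A3 rec _ _ deriv lipschitz xi])
      (auto simp: C_def hull_inc)
qed

end
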